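(* Let $\Lambda>1$. There is a coefficient $a\in C^\infty(\mathbb{T}^2;[1,\Lambda])$ and a constant $F_a>0$ such that for each $F\in(-F_a,F_a)$ and each uniformly continuous $u_0:\mathbb{R}^2\to\mathbb{R}$, if $(u^\varepsilon)_{\varepsilon>0}$ are the viscosity solutions of $$u^\varepsilon_t=a(\tfrac{x}{\varepsilon})\,\mathrm{tr}\big((\mathrm{Id}-\widehat{Du^\varepsilon}\otimes\widehat{Du^\varepsilon})D^2u^\varepsilon\big)+\tfrac1\varepsilon Da(\tfrac{x}{\varepsilon})\cdot Du^\varepsilon+\tfrac1\varepsilon F\|Du^\varepsilon\| \ \text{ in }\mathbb{R}^2\times(0,\infty),\qquad u^\varepsilon=u_0\ \text{ on }\mathbb{R}^2\times\{0\},$$ then $u^\varepsilon\to u_0$ locally uniformly in $\mathbb{R}^2\times[0,\infty)$ as $\varepsilon\to0^+$.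
   Context: $\widehat{p}=p/|p|$; $\mathbb{T}^2=\mathbb{R}^2/\mathbb{Z}^2$ and functions on it are identified with $\mathbb{Z}^2$-periodic functions on $\mathbb{R}^2$. Viscosity solutions of the geometric equation are understood in the standard sense. *)

theory Defs
  imports "HOL-Analysis.Analysis"
begin

definition has_partial :: "(real^2 \<Rightarrow> real) \<Rightarrow> 2 \<Rightarrow> real \<Rightarrow> real^2 \<Rightarrow> bool" where
  "has_partial f i d x \<longleftrightarrow> ((\<lambda>s. f (x + s *\<^sub>R axis i 1)) has_real_derivative d) (at 0)"

text \<open>C-infinity functions on R^2: continuous, and all first partials exist
  everywhere and are again C-infinity (coinductively).\<close>
coinductive smooth2 :: "(real^2 \<Rightarrow> real) \<Rightarrow> bool" where
  "continuous_on UNIV f \<Longrightarrow>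
   (\<forall>i. \<exists>g. (\<forall>x. has_partial f i (g x) x) \<and> smooth2 g) \<Longrightarrow> smooth2 f"

definition grad :: "(real^2 \<Rightarrow> real) \<Rightarrow> real^2 \<Rightarrow> real^2" where
  "grad f x = (\<chi> i. deriv (\<lambda>s. f (x + s *\<^sub>R axis i 1)) 0)"

text \<open>Z^2-periodic functions, i.e. functions on the torus T^2.\<close>
definition periodic2 :: "(real^2 \<Rightarrow> real) \<Rightarrow> bool" where
  "periodic2 f \<longleftrightarrow> (\<forall>x k. (\<forall>i. k $ i \<in> \<int>) \<longrightarrow> f (x + k) = f x)"

text \<open>tr((Id - q (x) q) X).\<close>
definition mc_term :: "real^2^2 \<Rightarrow> real^2 \<Rightarrow> real" where
  "mc_term X q = trace X - q \<bullet> (X *v q)"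

text \<open>Right-hand side H(x,p,X) of u_t = H(x,Du,D^2u) for
  u_t = a(x/e) tr((Id - p^ (x) p^) X) + (1/e) Da(x/e).p + (1/e) F |p|,
  and its upper / lower semicontinuous envelopes (they differ only at p = 0).\<close>
definition H_upper :: "(real^2 \<Rightarrow> real) \<Rightarrow> real \<Rightarrow> real \<Rightarrow> real^2 \<Rightarrow> real^2 \<Rightarrow> real^2^2 \<Rightarrow> real" where
  "H_upper a e F x p X =
     (if p \<noteq> 0 then
        a ((1/e) *\<^sub>R x) * mc_term X ((1 / norm p) *\<^sub>R p)
        + (1/e) * (grad a ((1/e) *\<^sub>R x) \<bullet> p) + (1/e) * F * norm p
      else a ((1/e) *\<^sub>R x) * (SUP q\<in>sphere 0 1. mc_term X q))"

definition H_lower :: "(real^2 \<Rightarrow> real) \<Rightarrow> real \<Rightarrow> real \<Rightarrow> real^2 \<Rightarrow> real^2 \<Rightarrow> real^2^2 \<Rightarrow> real" where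
  "H_lower a e F x p X =
     (if p \<noteq> 0 then
        a ((1/e) *\<^sub>R x) * mc_term X ((1 / norm p) *\<^sub>R p)
        + (1/e) * (grad a ((1/e) *\<^sub>R x) \<bullet> p) + (1/e) * F * norm p
      else a ((1/e) *\<^sub>R x) * (INF q\<in>sphere 0 1. mc_term X q))"

text \<open>Test functions phi(x,t) of class C^{2,1}, with time derivative pt,
  spatial gradient Dp and spatial Hessian D2p.\<close>
definition test_fn :: "(real^2 \<Rightarrow> real \<Rightarrow> real) \<Rightarrow> (real^2 \<Rightarrow> real \<Rightarrow> real)
    \<Rightarrow> (real^2 \<Rightarrow> real \<Rightarrow> real^2) \<Rightarrow> (real^2 \<Rightarrow> real \<Rightarrow> real^2^2) \<Rightarrow> bool" where
  "test_fn phi pt Dp D2p \<longleftrightarrow>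
     (\<forall>x t. ((\<lambda>z. phi (fst z) (snd z)) has_derivative
              (\<lambda>h. Dp x t \<bullet> fst h + pt x t * snd h)) (at (x, t)))
   \<and> (\<forall>x t. ((\<lambda>y. Dp y t) has_derivative (\<lambda>h. D2p x t *v h)) (at x))
   \<and> continuous_on UNIV (\<lambda>z. pt (fst z) (snd z))
   \<and> continuous_on UNIV (\<lambda>z. Dp (fst z) (snd z))
   \<and> continuous_on UNIV (\<lambda>z. D2p (fst z) (snd z))"

definition loc_max_at :: "(real^2 \<Rightarrow> real \<Rightarrow> real) \<Rightarrow> real^2 \<Rightarrow> real \<Rightarrow> bool" where
  "loc_max_at w x t \<longleftrightarrow> (\<exists>r>0. \<forall>y s. s > 0 \<and> dist y x < r \<and> \<bar>s - t\<bar> < r \<longrightarrow> w y s \<le> w x t)"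

definition loc_min_at :: "(real^2 \<Rightarrow> real \<Rightarrow> real) \<Rightarrow> real^2 \<Rightarrow> real \<Rightarrow> bool" where
  "loc_min_at w x t \<longleftrightarrow> (\<exists>r>0. \<forall>y s. s > 0 \<and> dist y x < r \<and> \<bar>s - t\<bar> < r \<longrightarrow> w y s \<ge> w x t)"

definition visc_sub :: "(real^2 \<Rightarrow> real) \<Rightarrow> real \<Rightarrow> real \<Rightarrow> (real^2 \<Rightarrow> real \<Rightarrow> real) \<Rightarrow> bool" where
  "visc_sub a e F u \<longleftrightarrow>
     (\<forall>phi pt Dp D2p x t. test_fn phi pt Dp D2p \<and> t > 0
        \<and> loc_max_at (\<lambda>y s. u y s - phi y s) x t
        \<longrightarrow> pt x t \<le> H_upper a e F x (Dp x t) (D2p x t))"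

definition visc_super :: "(real^2 \<Rightarrow> real) \<Rightarrow> real \<Rightarrow> real \<Rightarrow> (real^2 \<Rightarrow> real \<Rightarrow> real) \<Rightarrow> bool" where
  "visc_super a e F u \<longleftrightarrow>
     (\<forall>phi pt Dp D2p x t. test_fn phi pt Dp D2p \<and> t > 0
        \<and> loc_min_at (\<lambda>y s. u y s - phi y s) x t
        \<longrightarrow> pt x t \<ge> H_lower a e F x (Dp x t) (D2p x t))"

text \<open>u is the viscosity solution of the Cauchy problem with initial datum u0:
  continuous on R^2 x [0,oo), u(.,0) = u0, sub- and supersolution, and in the
  standard uniqueness class of functions with at most linear growth in x,
  locally uniformly in t.\<close>
definition visc_solution :: "(real^2 \<Rightarrow> real) \<Rightarrow> real \<Rightarrow> real \<Rightarrow> (real^2 \<Rightarrow> real)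
    \<Rightarrow> (real^2 \<Rightarrow> real \<Rightarrow> real) \<Rightarrow> bool" where
  "visc_solution a e F u0 u \<longleftrightarrow>
     continuous_on (UNIV \<times> {0..}) (\<lambda>z. u (fst z) (snd z))
   \<and> (\<forall>x. u x 0 = u0 x)
   \<and> (\<forall>T>0. \<exists>C. \<forall>x t. 0 \<le> t \<and> t \<le> T \<longrightarrow> \<bar>u x t\<bar> \<le> C * (1 + norm x))
   \<and> visc_sub a e F u \<and> visc_super a e F u"

definition loc_unif_conv :: "(real \<Rightarrow> real^2 \<Rightarrow> real \<Rightarrow> real) \<Rightarrow> (real^2 \<Rightarrow> real) \<Rightarrow> bool" where
  "loc_unif_conv u u0 \<longleftrightarrow>
     (\<forall>K. compact K \<and> K \<subseteq> UNIV \<times> {0..} \<longrightarrow>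
        (\<forall>\<delta>>0. \<exists>e0>0. \<forall>e. 0 < e \<and> e < e0 \<longrightarrow>
           (\<forall>z\<in>K. \<bar>u e (fst z) (snd z) - u0 (fst z)\<bar> < \<delta>)))"

end

theory Submission
  imports Defs
begin

(* The coefficient is a = 1 + c * sum_sigma A_K(B_sigma) (pinning_coeff). Here
   B_1(w) = f(cos pi w_1) + f(cos pi w_2) with f(u) = u^2 - u^3/2 (cell_level 1, prof) equals 1 at
   the centre of the cell [-1,1]^2 and is at least 3/2 on its boundary, the B_sigma are the
   translates of B_1 by {0,1}^2, and A_K(s) = exp(-exp(K(s - 5/4))) (cutoff) falls steeply across
   the level 5/4. In the band |B_1 - 5/4| <= 1/K the drift obeys Da . DB_1 <= -cK/81 |DB_1|^2, and
   since |DB_1| is bounded below there, for large K this beats the curvature term and the forcing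
   |F| |Du|, which after rescaling the cell by e carry the same factor 1/e as the drift. Hence
   M ((B_1 - 5/4 + 1/K)_+)^3, placed on an e-cell around a lattice point, is a strict supersolution
   barrier: a subsolution that starts below l on the cell stays below l at its centre for all time.
   Applied to u^e and -u^e this pins u^e(x,t) within the oscillation of u_0 on the ball of radius 3e
   around x, uniformly in t. *)

lemma exhaust_2_cases: "(i::2) = 1 \<or> i = 2"
  using exhaust_2 by blast

lemma cos_pi_add_int:
  assumes "r \<in> \<int>"
  shows "cos (pi * (t + r)) = cos (pi * r) * cos (pi * t)" and "cos (pi * r) = 1 \<or> cos (pi * r) = -1"
proof -
  have "sin (pi * r) = 0" using assms sin_times_pi_eq_0[of r] by (simp add: mult.commute)
  moreover from this have "cos (pi * r)^2 = 1" using sin_cos_squared_add[of "pi * r"] by simp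
  ultimately show "cos (pi * (t + r)) = cos (pi * r) * cos (pi * t)" "cos (pi * r) = 1 \<or> cos (pi * r) = -1"
    by (simp_all add: distrib_left cos_add power2_eq_1_iff)
qed

lemma compact_continuous_pos_bounded_below:
  fixes f :: "'a::topological_space \<Rightarrow> real"
  assumes "compact S" "continuous_on S f" "\<And>x. x \<in> S \<Longrightarrow> 0 < f x"
  obtains d where "0 < d" "\<And>x. x \<in> S \<Longrightarrow> d \<le> f x"
proof (cases "S = {}")
  case False
  then obtain z where "z \<in> S" "\<forall>x\<in>S. f z \<le> f x"
    using continuous_attains_inf[OF assms(1) _ assms(2)] by blast
  then show ?thesis using assms(3) that by blast
qed (use that[of 1] in auto)

lemma pos_part_power_has_real_derivative:
  assumes "2 \<le> n"
  shows "((\<lambda>s. (max 0 (s - b))^n) has_real_derivative real n * (max 0 (s - b))^(n - 1)) (at s)"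
proof -
  have "((\<lambda>x. (max 0 x)^n) has_real_derivative real n * (max 0 x)^(n - 1)) (at x)" for x :: real
  proof -
    consider "0 < x" | "x < 0" | "x = 0" by linarith
    then show ?thesis
    proof cases
      case 1
      show ?thesis
        by (rule has_field_derivative_transform_within_open[where f = "\<lambda>x. x^n" and S = "{0<..}"])
          (use 1 in \<open>auto intro!: derivative_eq_intros\<close>)
    next
      case 2
      show ?thesis
        by (rule has_field_derivative_transform_within_open[where f = "\<lambda>x. 0" and S = "{..<0}"])
          (use 2 assms in \<open>auto simp: power_0_left\<close>)
    next
      case 3
      have "norm ((max 0 h)^n / h) \<le> \<bar>h\<bar>" if "\<bar>h\<bar> < 1" for h :: real
      proof -
        have "\<bar>max 0 h\<bar>^n \<le> \<bar>h\<bar>^2"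
          using that assms by (intro order.trans[OF power_mono power_decreasing]) auto
        then show ?thesis
          by (simp add: power_abs divide_le_eq power2_eq_square mult_le_cancel_right split: if_splits)
      qed
      then have "\<forall>\<^sub>F h in at (0::real). norm ((max 0 h)^n / h) \<le> \<bar>h\<bar>"
        unfolding eventually_at by (intro exI[of _ 1]) auto
      then have "((\<lambda>h. (max 0 h)^n / h) \<longlongrightarrow> 0) (at (0::real))"
        by (rule Lim_null_comparison) (auto intro!: tendsto_eq_intros)
      then show ?thesis
        using 3 assms by (simp add: DERIV_def zero_power)
    qed
  qed
  from DERIV_chain2[OF this, of "\<lambda>s. s - b" 1 s] show ?thesis
    by (simp add: DERIV_diff[OF DERIV_ident DERIV_const, simplified])
qed

lemma has_derivative_vec_nth_comp:
  fixes x :: "real^'n"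
  assumes "(g has_real_derivative g') (at (x$i))"
  shows "((\<lambda>y. g (y$i)) has_derivative (\<lambda>h. g' * h$i)) (at x)"
  using DERIV_compose_FDERIV[OF assms bounded_linear_imp_has_derivative[OF bounded_linear_vec_nth]]
  by (simp add: mult.commute)

lemma has_derivative_componentwiseI:
  fixes f :: "'a::real_normed_vector \<Rightarrow> real^'n"
  assumes "\<And>i. ((\<lambda>y. f y $ i) has_derivative (\<lambda>h. f' h $ i)) (at x)"
  shows "(f has_derivative f') (at x)"
proof -
  have "((\<lambda>y. f y \<bullet> b) has_derivative (\<lambda>h. f' h \<bullet> b)) (at x)" if "b \<in> Basis" for b
  proof -
    obtain i where "b = axis i 1" using \<open>b \<in> Basis\<close> axis_inverse by blast
    then show ?thesis using assms[of i] by (simp add: inner_axis)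
  qed
  then show ?thesis by (subst has_derivative_componentwise_within) blast
qed

lemma has_derivative_separable:
  fixes x :: "real^'n"
  assumes "\<And>i. (p i has_real_derivative p' i (x$i)) (at (x$i))"
  shows "((\<lambda>y. \<Sum>i\<in>UNIV. p i (y$i)) has_derivative (\<lambda>h. (\<chi> i. p' i (x$i)) \<bullet> h)) (at x)"
  using has_derivative_sum[of UNIV "\<lambda>i y. p i (y$i)" "\<lambda>i h. p' i (x$i) * h$i", OF has_derivative_vec_nth_comp[OF assms]]
  by (simp add: inner_vec_def)

lemma has_derivative_separable_grad:
  fixes x :: "real^'n"
  assumes "\<And>i. (p' i has_real_derivative p'' i (x$i)) (at (x$i))"
  shows "((\<lambda>y. \<chi> i. p' i (y$i)) has_derivative
           (\<lambda>h. (\<chi> i j. if i = j then p'' i (x$i) else 0) *v h)) (at x)"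
proof (rule has_derivative_componentwiseI)
  fix i
  show "((\<lambda>y. (\<chi> i. p' i (y$i)) $ i) has_derivative
      (\<lambda>h. ((\<chi> i j. if i = j then p'' i (x$i) else 0) *v h) $ i)) (at x)"
    using has_derivative_vec_nth_comp[OF assms[of i]]
    by (simp add: matrix_vector_mult_def if_distrib[of "\<lambda>z. z * y" for y] cong: if_cong)
qed

lemma has_derivative_scaleR_grad_comp:
  fixes B :: "real^'n \<Rightarrow> real"
  assumes "(g' has_real_derivative g'' (B x)) (at (B x))"
    and "(B has_derivative (\<lambda>h. DB x \<bullet> h)) (at x)"
    and "(DB has_derivative (\<lambda>h. HB *v h)) (at x)"
  shows "((\<lambda>y. g' (B y) *\<^sub>R DB y) has_derivative
           (\<lambda>h. (\<chi> i j. g'' (B x) * DB x $ i * DB x $ j + g' (B x) * HB $ i $ j) *v h)) (at x)"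
  using has_derivative_scaleR[OF DERIV_compose_FDERIV[OF assms(1,2)] assms(3)]
  by (rule has_derivative_eq_rhs)
    (simp add: fun_eq_iff vec_eq_iff matrix_vector_mult_def inner_vec_def sum_distrib_left
      sum.distrib algebra_simps)

lemma grad_eqI:
  assumes "(f has_derivative (\<lambda>h. G \<bullet> h)) (at x)"
  shows "grad f x = G"
proof -
  have "((\<lambda>s. f (x + s *\<^sub>R axis i 1)) has_real_derivative G$i) (at 0)" for i
  proof -
    have "((\<lambda>s. x + s *\<^sub>R axis i 1) has_derivative (\<lambda>s. s *\<^sub>R axis i 1)) (at 0)"
      by (auto intro!: derivative_eq_intros)
    from has_derivative_compose[OF this, of f "(\<bullet>) G"] assms
    have "((\<lambda>s. f (x + s *\<^sub>R axis i 1)) has_derivative (\<lambda>s. G \<bullet> (s *\<^sub>R axis i 1))) (at 0)"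
      by simp
    then show ?thesis
      unfolding has_field_derivative_def
      by (rule has_derivative_eq_rhs) (simp add: fun_eq_iff inner_axis)
  qed
  then show ?thesis
    by (simp add: grad_def vec_eq_iff DERIV_imp_deriv)
qed

lemma grad_periodic2:
  assumes "periodic2 f" "\<forall>i. k$i \<in> \<int>"
  shows "grad f (w + k) = grad f w"
proof -
  have "f (w + k + s *\<^sub>R axis i 1) = f (w + s *\<^sub>R axis i 1)" for s i
    using assms unfolding periodic2_def by (metis add.commute add.left_commute)
  then show ?thesis by (simp add: grad_def)
qed

lemma matrix_vector_mult_uminus_left: "(- A) *v x = - (A *v x)"
  for A :: "'a::ring_1^'n^'m"
  by (simp add: matrix_vector_mult_def sum_negf vec_eq_iff)

lemma matrix_vector_mult_uminus_right: "A *v (- x) = - (A *v x)"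
  for A :: "'a::ring_1^'n^'m"
  by (simp add: matrix_vector_mult_def sum_negf vec_eq_iff)

section \<open>A class of smooth functions\<close>

inductive_set trig_exp :: "(real^2 \<Rightarrow> real) set" where
  const: "(\<lambda>y. k) \<in> trig_exp"
| cos: "(\<lambda>y. cos (pi * y$j)) \<in> trig_exp"
| sin: "(\<lambda>y. sin (pi * y$j)) \<in> trig_exp"
| add: "f \<in> trig_exp \<Longrightarrow> g \<in> trig_exp \<Longrightarrow> (\<lambda>y. f y + g y) \<in> trig_exp"
| diff: "f \<in> trig_exp \<Longrightarrow> g \<in> trig_exp \<Longrightarrow> (\<lambda>y. f y - g y) \<in> trig_exp"
| mult: "f \<in> trig_exp \<Longrightarrow> g \<in> trig_exp \<Longrightarrow> (\<lambda>y. f y * g y) \<in> trig_exp"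
| uminus: "f \<in> trig_exp \<Longrightarrow> (\<lambda>y. - f y) \<in> trig_exp"
| power: "f \<in> trig_exp \<Longrightarrow> (\<lambda>y. f y ^ n) \<in> trig_exp"
| exp: "f \<in> trig_exp \<Longrightarrow> (\<lambda>y. exp (f y)) \<in> trig_exp"

lemma trig_exp_sum:
  assumes "finite A" "\<And>a. a \<in> A \<Longrightarrow> f a \<in> trig_exp"
  shows "(\<lambda>y. \<Sum>a\<in>A. f a y) \<in> trig_exp"
  using assms by (induction A rule: finite_induct) (auto intro: trig_exp.intros)

lemma trig_exp_continuous: "f \<in> trig_exp \<Longrightarrow> continuous_on UNIV f"
  by (induction rule: trig_exp.induct) (auto intro!: continuous_intros)

lemma trig_exp_has_partial: "f \<in> trig_exp \<Longrightarrow> \<exists>g\<in>trig_exp. \<forall>x. has_partial f i (g x) x"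
proof (induction rule: trig_exp.induct)
  case (const k)
  show ?case by (auto simp: has_partial_def intro!: bexI[of _ "\<lambda>y. 0"] trig_exp.intros)
next
  case (cos j)
  show ?case
    by (auto simp: has_partial_def axis_def intro!: bexI[of _ "\<lambda>y. - (pi * (if j = i then 1 else 0)) * sin (pi * y$j)"]
        derivative_eq_intros trig_exp.intros)
next
  case (sin j)
  show ?case
    by (auto simp: has_partial_def axis_def intro!: bexI[of _ "\<lambda>y. pi * (if j = i then 1 else 0) * cos (pi * y$j)"]
        derivative_eq_intros trig_exp.intros)
next
  case (add f g)
  then obtain f' g' where "f' \<in> trig_exp" "g' \<in> trig_exp" "\<forall>x. has_partial f i (f' x) x" "\<forall>x. has_partial g i (g' x) x"
    by blast
  then show ?case
    by (auto simp: has_partial_def intro!: bexI[of _ "\<lambda>y. f' y + g' y"] derivative_eq_intros trig_exp.intros)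
next
  case (diff f g)
  then obtain f' g' where "f' \<in> trig_exp" "g' \<in> trig_exp" "\<forall>x. has_partial f i (f' x) x" "\<forall>x. has_partial g i (g' x) x"
    by blast
  then show ?case
    by (auto simp: has_partial_def intro!: bexI[of _ "\<lambda>y. f' y - g' y"] derivative_eq_intros trig_exp.intros)
next
  case (mult f g)
  then obtain f' g' where "f' \<in> trig_exp" "g' \<in> trig_exp" "\<forall>x. has_partial f i (f' x) x" "\<forall>x. has_partial g i (g' x) x"
    by blast
  with mult.hyps show ?case
    by (auto simp: has_partial_def intro!: bexI[of _ "\<lambda>y. f' y * g y + f y * g' y"] derivative_eq_intros trig_exp.intros)
next
  case (uminus f)
  then obtain f' where "f' \<in> trig_exp" "\<forall>x. has_partial f i (f' x) x" by blast
  then show ?case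
    by (auto simp: has_partial_def intro!: bexI[of _ "\<lambda>y. - f' y"] derivative_eq_intros trig_exp.intros)
next
  case (power f n)
  then obtain f' where "f' \<in> trig_exp" "\<forall>x. has_partial f i (f' x) x" by blast
  with power.hyps show ?case
    by (auto simp: has_partial_def intro!: bexI[of _ "\<lambda>y. of_nat n * f y ^ (n - 1) * f' y"] derivative_eq_intros trig_exp.intros)
next
  case (exp f)
  then obtain f' where "f' \<in> trig_exp" "\<forall>x. has_partial f i (f' x) x" by blast
  with exp.hyps show ?case
    by (auto simp: has_partial_def intro!: bexI[of _ "\<lambda>y. exp (f y) * f' y"] derivative_eq_intros trig_exp.intros)
qed

lemma trig_exp_smooth2: "f \<in> trig_exp \<Longrightarrow> smooth2 f"
proof (coinduction arbitrary: f rule: smooth2.coinduct)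
  case (smooth2 f)
  then show ?case using trig_exp_continuous trig_exp_has_partial by blast
qed

section \<open>Test functions and viscosity subsolutions\<close>

lemma test_fn_separable:
  fixes Q :: "real^2 \<Rightarrow> real" and DQ :: "real^2 \<Rightarrow> real^2" and D2Q :: "real^2 \<Rightarrow> real^2^2"
  assumes "\<And>t. (P has_real_derivative P' t) (at t)" and "continuous_on UNIV P'"
    and Q: "\<And>x. (Q has_derivative (\<lambda>h. DQ x \<bullet> h)) (at x)"
    and DQ: "\<And>x. (DQ has_derivative (\<lambda>h. D2Q x *v h)) (at x)"
    and "continuous_on UNIV D2Q"
  shows "test_fn (\<lambda>x t. Q x + P t) (\<lambda>x t. P' t) (\<lambda>x t. DQ x) (\<lambda>x t. D2Q x)"
  unfolding test_fn_def
proof (intro conjI allI)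
  fix x :: "real^2" and t :: real
  have "((\<lambda>z. Q (fst z)) has_derivative (\<lambda>h. DQ x \<bullet> fst h)) (at (x, t))"
    using diff_chain_at[OF bounded_linear_imp_has_derivative[OF bounded_linear_fst] Q[of "fst (x, t)"]]
    by (simp add: o_def)
  moreover have "((\<lambda>z. P (snd z)) has_derivative (\<lambda>h. snd h * P' t)) (at (x, t))"
    using DERIV_compose_FDERIV[OF assms(1) bounded_linear_imp_has_derivative[OF bounded_linear_snd],
        of "(x, t)"]
    by simp
  ultimately show "((\<lambda>z. Q (fst z) + P (snd z)) has_derivative (\<lambda>h. DQ x \<bullet> fst h + P' t * snd h)) (at (x, t))"
    by (auto dest: has_derivative_add simp: mult.commute)
  show "((\<lambda>y. DQ y) has_derivative (\<lambda>h. D2Q x *v h)) (at x)" using DQ by simp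
next
  have "continuous_on UNIV DQ"
    using DQ has_derivative_continuous by (intro continuous_at_imp_continuous_on) blast
  then show "continuous_on UNIV (\<lambda>z::(real^2) \<times> real. DQ (fst z))"
    by (rule continuous_on_compose2[OF _ continuous_on_fst]) auto
  show "continuous_on UNIV (\<lambda>z::(real^2) \<times> real. P' (snd z))"
    by (rule continuous_on_compose2[OF assms(2) continuous_on_snd]) auto
  show "continuous_on UNIV (\<lambda>z::(real^2) \<times> real. D2Q (fst z))"
    by (rule continuous_on_compose2[OF assms(5) continuous_on_fst]) auto
qed

lemma test_fn_continuous_on:
  assumes "test_fn \<Psi> \<Psi>t D\<Psi> D2\<Psi>"
  shows "continuous_on UNIV (\<lambda>z. \<Psi> (fst z) (snd z))"
proof -
  have "\<forall>z. ((\<lambda>z. \<Psi> (fst z) (snd z)) has_derivative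
      (\<lambda>h. D\<Psi> (fst z) (snd z) \<bullet> fst h + \<Psi>t (fst z) (snd z) * snd h)) (at z)"
    using assms unfolding test_fn_def by auto
  then show ?thesis
    using has_derivative_continuous by (intro continuous_at_imp_continuous_on) blast
qed

lemma test_fn_uminus:
  assumes "test_fn \<phi> \<phi>t D\<phi> D2\<phi>"
  shows "test_fn (\<lambda>x t. - \<phi> x t) (\<lambda>x t. - \<phi>t x t) (\<lambda>x t. - D\<phi> x t) (\<lambda>x t. - D2\<phi> x t)"
  unfolding test_fn_def
proof (intro conjI allI)
  fix x t
  have "((\<lambda>z. \<phi> (fst z) (snd z)) has_derivative (\<lambda>h. D\<phi> x t \<bullet> fst h + \<phi>t x t * snd h)) (at (x, t))"
    using assms unfolding test_fn_def by blast
  from has_derivative_minus[OF this]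
  show "((\<lambda>z. - \<phi> (fst z) (snd z)) has_derivative (\<lambda>h. - D\<phi> x t \<bullet> fst h + - \<phi>t x t * snd h)) (at (x, t))"
    by (rule has_derivative_eq_rhs) (simp add: fun_eq_iff)
  have "((\<lambda>y. D\<phi> y t) has_derivative (\<lambda>h. D2\<phi> x t *v h)) (at x)"
    using assms unfolding test_fn_def by blast
  from has_derivative_minus[OF this]
  show "((\<lambda>y. - D\<phi> y t) has_derivative (\<lambda>h. (- D2\<phi> x t) *v h)) (at x)"
    by (simp add: matrix_vector_mult_uminus_left)
qed (use assms in \<open>auto simp: test_fn_def intro: continuous_on_minus\<close>)

lemma mc_term_uminus: "mc_term (- X) q = - mc_term X q"
  by (simp add: mc_term_def trace_def sum_negf matrix_vector_mult_uminus_left)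

lemma mc_term_uminus_dir: "mc_term X (- q) = mc_term X q"
  by (simp add: mc_term_def matrix_vector_mult_uminus_right)

lemma mc_term_rank_one_plus_diag_le:
  fixes v :: "real^2" and X :: "real^2^2"
  assumes "v \<noteq> 0" "0 \<le> \<beta>" "\<And>i. \<bar>d i\<bar> \<le> D"
    and X: "\<And>i j. X$i$j = \<alpha> * v$i * v$j + \<beta> * (if i = j then d i else 0)"
  shows "mc_term X ((1 / norm v) *\<^sub>R v) \<le> \<beta> * D"
proof -
  define q where "q = (1 / norm v) *\<^sub>R v"
  have v: "v$i = norm v * q$i" for i
    using assms(1) by (simp add: q_def)
  have "(norm v)^2 = (v$1)^2 + (v$2)^2"
    unfolding power2_norm_eq_inner by (simp add: inner_vec_def sum_2 power2_eq_square)
  moreover have "(q$1)^2 + (q$2)^2 = ((v$1)^2 + (v$2)^2) / (norm v)^2"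
    by (simp add: q_def power_divide add_divide_distrib)
  moreover have "v$1 \<noteq> 0 \<or> v$2 \<noteq> 0"
    using assms(1) by (metis (full_types) exhaust_2 vec_eq_iff zero_index)
  ultimately have q: "(q$1)^2 + (q$2)^2 = 1"
    by simp
  have "mc_term X q = \<beta> * (d 1 * (q$2)^2 + d 2 * (q$1)^2)" \<comment> \<open>the rank-one part drops out\<close>
    unfolding mc_term_def trace_def inner_vec_def matrix_vector_mult_def sum_2 X v
    using q by simp algebra
  also have "\<dots> \<le> \<beta> * (D * (q$2)^2 + D * (q$1)^2)"
    using assms(2,3) abs_le_D1 by (intro mult_left_mono add_mono mult_right_mono) auto
  also have "\<dots> = \<beta> * D * ((q$1)^2 + (q$2)^2)"
    by (simp add: algebra_simps)
  also have "\<dots> = \<beta> * D"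
    using q by simp
  finally show ?thesis unfolding q_def .
qed

lemma H_upper_zero: "H_upper a e F x 0 0 = 0"
  by (simp add: H_upper_def mc_term_def trace_def)

lemma H_upper_scaleR_le:
  assumes "0 < \<kappa>" "v \<noteq> 0" "0 < e" "0 \<le> C"
    and "0 \<le> a ((1/e) *\<^sub>R x)" "a ((1/e) *\<^sub>R x) \<le> A"
    and "mc_term X ((1 / norm v) *\<^sub>R v) \<le> \<kappa> / e * C"
  shows "H_upper a e F x (\<kappa> *\<^sub>R v) X \<le> \<kappa> / e * (A * C + grad a ((1/e) *\<^sub>R x) \<bullet> v + \<bar>F\<bar> * norm v)"
proof -
  have "H_upper a e F x (\<kappa> *\<^sub>R v) X
      = a ((1/e) *\<^sub>R x) * mc_term X ((1 / norm v) *\<^sub>R v) + \<kappa> / e * (grad a ((1/e) *\<^sub>R x) \<bullet> v + F * norm v)"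
    using assms(1,2) by (simp add: H_upper_def algebra_simps)
  also have "\<dots> \<le> A * (\<kappa> / e * C) + \<kappa> / e * (grad a ((1/e) *\<^sub>R x) \<bullet> v + \<bar>F\<bar> * norm v)"
  proof (rule add_mono)
    have "0 \<le> \<kappa> / e * C" using assms(1,3,4) by simp
    with assms(5-7) show "a ((1/e) *\<^sub>R x) * mc_term X ((1 / norm v) *\<^sub>R v) \<le> A * (\<kappa> / e * C)"
      by (intro order_trans[OF mult_left_mono mult_right_mono]) auto
    show "\<kappa> / e * (grad a ((1/e) *\<^sub>R x) \<bullet> v + F * norm v) \<le> \<kappa> / e * (grad a ((1/e) *\<^sub>R x) \<bullet> v + \<bar>F\<bar> * norm v)"
      using assms(1,3) by (intro mult_left_mono add_left_mono mult_right_mono) auto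
  qed
  finally show ?thesis by (simp add: algebra_simps)
qed

lemma H_upper_uminus: "H_upper a e (- F) x p X = - H_lower a e F x (- p) (- X)"
proof (cases "p = 0")
  case True
  then show ?thesis
    by (simp add: H_upper_def H_lower_def mc_term_uminus Inf_real_def image_image)
next
  case False
  have "(1 / norm (- p)) *\<^sub>R (- p) = - ((1 / norm p) *\<^sub>R p)" by simp
  with False show ?thesis
    by (simp add: H_upper_def H_lower_def mc_term_uminus mc_term_uminus_dir algebra_simps)
qed

lemma visc_super_uminus:
  assumes "visc_super a e F u"
  shows "visc_sub a e (- F) (\<lambda>x t. - u x t)"
  unfolding visc_sub_def
proof (intro allI impI)
  fix \<phi> \<phi>t D\<phi> D2\<phi> x t
  assume h: "test_fn \<phi> \<phi>t D\<phi> D2\<phi> \<and> 0 < t \<and> loc_max_at (\<lambda>y s. - u y s - \<phi> y s) x t"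
  then have "loc_min_at (\<lambda>y s. u y s - (- \<phi> y s)) x t"
    unfolding loc_max_at_def loc_min_at_def by (simp add: algebra_simps)
  with h assms test_fn_uminus have "H_lower a e F x (- D\<phi> x t) (- D2\<phi> x t) \<le> - \<phi>t x t"
    unfolding visc_super_def by blast
  then show "\<phi>t x t \<le> H_upper a e (- F) x (D\<phi> x t) (D2\<phi> x t)"
    by (simp add: H_upper_uminus)
qed

lemma loc_max_at_interior_max:
  assumes "open I" "I \<subseteq> D" "x \<in> I" "0 < t" "t < T"
    and "\<And>y s. y \<in> D \<Longrightarrow> 0 \<le> s \<Longrightarrow> s \<le> T \<Longrightarrow> w y s \<le> w x t"
  shows "loc_max_at w x t"
proof -
  obtain r where r: "0 < r" "ball x r \<subseteq> I"
    using assms(1,3) openE by blast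
  show ?thesis
    unfolding loc_max_at_def
  proof (intro exI[of _ "min r (min t (T - t))"] conjI allI impI)
    fix y s assume "0 < s \<and> dist y x < min r (min t (T - t)) \<and> \<bar>s - t\<bar> < min r (min t (T - t))"
    then have "y \<in> ball x r" "0 < s" "s < T"
      by (auto simp: dist_commute)
    moreover from this(1) have "y \<in> D"
      using r(2) assms(2) by blast
    ultimately show "w y s \<le> w x t"
      using assms(6) by simp
  qed (use r assms(4,5) in auto)
qed

lemma visc_sub_le_strict_supersolution:
  fixes u \<Psi> :: "real^2 \<Rightarrow> real \<Rightarrow> real"
  assumes sub: "visc_sub a e F u"
    and cont: "continuous_on (UNIV \<times> {0..}) (\<lambda>z. u (fst z) (snd z))"
    and test: "test_fn \<Psi> \<Psi>t D\<Psi> D2\<Psi>"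
    and D: "compact D" and I: "open I" "I \<subseteq> D"
    and strict: "\<And>x t. x \<in> I \<Longrightarrow> 0 < t \<Longrightarrow> t < T \<Longrightarrow> H_upper a e F x (D\<Psi> x t) (D2\<Psi> x t) < \<Psi>t x t"
    and initial: "\<And>x. x \<in> D \<Longrightarrow> u x 0 \<le> \<Psi> x 0"
    and final: "\<And>x. x \<in> D \<Longrightarrow> u x T \<le> \<Psi> x T"
    and lateral: "\<And>x t. x \<in> D \<Longrightarrow> x \<notin> I \<Longrightarrow> 0 \<le> t \<Longrightarrow> t \<le> T \<Longrightarrow> u x t \<le> \<Psi> x t"
    and x: "x \<in> D" and t: "0 \<le> t" "t \<le> T"
  shows "u x t \<le> \<Psi> x t"
proof -
  define h where "h z = u (fst z) (snd z) - \<Psi> (fst z) (snd z)" for z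
  have "continuous_on (D \<times> {0..T}) (\<lambda>z. u (fst z) (snd z))"
    by (rule continuous_on_subset[OF cont]) auto
  moreover have "continuous_on (D \<times> {0..T}) (\<lambda>z. \<Psi> (fst z) (snd z))"
    by (rule continuous_on_subset[OF test_fn_continuous_on[OF test]]) auto
  ultimately have "continuous_on (D \<times> {0..T}) h"
    unfolding h_def by (rule continuous_on_diff)
  moreover have "compact (D \<times> {0..T})" "D \<times> {0..T} \<noteq> {}"
    using D x t by (auto intro: compact_Times)
  ultimately obtain z where "z \<in> D \<times> {0..T}" "\<forall>y\<in>D \<times> {0..T}. h y \<le> h z"
    using continuous_attains_sup by blast
  moreover obtain xs ts where "z = (xs, ts)" by (cases z)
  ultimately have max: "(xs, ts) \<in> D \<times> {0..T}" "\<forall>y\<in>D \<times> {0..T}. h y \<le> h (xs, ts)"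
    by auto
  have "h (xs, ts) \<le> 0"
  proof (rule ccontr)
    assume pos: "\<not> h (xs, ts) \<le> 0"
    have "xs \<in> D" "0 \<le> ts" "ts \<le> T" using max(1) by auto
    moreover from this pos have "ts \<noteq> 0" "ts \<noteq> T" "xs \<in> I"
      using initial[of xs] final[of xs] lateral[of xs ts] by (auto simp: h_def)
    ultimately have "0 < ts" "ts < T" "xs \<in> I" by auto
    moreover have "u y s - \<Psi> y s \<le> u xs ts - \<Psi> xs ts" if "y \<in> D" "0 \<le> s" "s \<le> T" for y s
      using max(2) that by (auto simp: h_def)
    ultimately have "loc_max_at (\<lambda>y s. u y s - \<Psi> y s) xs ts"
      using I by (intro loc_max_at_interior_max[of I D _ _ T]) auto
    then have "\<Psi>t xs ts \<le> H_upper a e F xs (D\<Psi> xs ts) (D2\<Psi> xs ts)"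
      using sub test \<open>0 < ts\<close> unfolding visc_sub_def by blast
    with strict[OF \<open>xs \<in> I\<close> \<open>0 < ts\<close> \<open>ts < T\<close>] show False by simp
  qed
  moreover have "h (x, t) \<le> h (xs, ts)"
    using max(2) x t by auto
  ultimately show ?thesis by (simp add: h_def)
qed

lemma loc_unif_convI:
  assumes "\<And>\<delta>. 0 < \<delta> \<Longrightarrow> \<exists>e0>0. \<forall>e x t. 0 < e \<longrightarrow> e < e0 \<longrightarrow> 0 \<le> t \<longrightarrow> \<bar>u e x t - u0 x\<bar> < \<delta>"
  shows "loc_unif_conv u u0"
  unfolding loc_unif_conv_def
proof (intro allI impI)
  fix Z :: "((real^2) \<times> real) set" and \<delta> :: real
  assume Z: "compact Z \<and> Z \<subseteq> UNIV \<times> {0..}" and "0 < \<delta>"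
  obtain e0 where "0 < e0" and e0: "\<forall>e x t. 0 < e \<longrightarrow> e < e0 \<longrightarrow> 0 \<le> t \<longrightarrow> \<bar>u e x t - u0 x\<bar> < \<delta>"
    using assms[OF \<open>0 < \<delta>\<close>] by blast
  show "\<exists>e0>0. \<forall>e. 0 < e \<and> e < e0 \<longrightarrow> (\<forall>z\<in>Z. \<bar>u e (fst z) (snd z) - u0 (fst z)\<bar> < \<delta>)"
  proof (intro exI[of _ e0] conjI allI impI ballI)
    fix e z assume "0 < e \<and> e < e0" "z \<in> Z"
    moreover from this Z have "0 \<le> snd z" by auto
    ultimately show "\<bar>u e (fst z) (snd z) - u0 (fst z)\<bar> < \<delta>" using e0 by blast
  qed (fact \<open>0 < e0\<close>)
qed

section \<open>The coefficient\<close>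

definition prof :: "real \<Rightarrow> real" where "prof u = u^2 - 1/2 * u^3"

definition prof_deriv :: "real \<Rightarrow> real" where "prof_deriv u = 2 * u - 3/2 * u^2"

definition prof_deriv2 :: "real \<Rightarrow> real" where "prof_deriv2 u = 2 - 3 * u"

lemma prof_has_real_derivative [derivative_intros]:
  "(f has_real_derivative f') (at x within S) \<Longrightarrow>
    ((\<lambda>x. prof (f x)) has_real_derivative prof_deriv (f x) * f') (at x within S)"
  unfolding prof_def prof_deriv_def by (auto intro!: derivative_eq_intros simp: algebra_simps)

lemma prof_deriv_has_real_derivative [derivative_intros]:
  "(f has_real_derivative f') (at x within S) \<Longrightarrow>
    ((\<lambda>x. prof_deriv (f x)) has_real_derivative prof_deriv2 (f x) * f') (at x within S)"
  unfolding prof_deriv_def prof_deriv2_def by (auto intro!: derivative_eq_intros simp: algebra_simps)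

lemma prof_nonneg:
  assumes "\<bar>u\<bar> \<le> 1"
  shows "0 \<le> prof u"
proof -
  have "0 \<le> u^2 * (1 - u/2)" using assms by (simp add: abs_le_iff)
  also have "u^2 * (1 - u/2) = prof u" by (simp add: prof_def algebra_simps power3_eq_cube power2_eq_square)
  finally show ?thesis .
qed

lemma prof_le_half:
  assumes "0 \<le> u" "u \<le> 1"
  shows "prof u \<le> 1/2"
proof -
  have "0 \<le> (1 - u) * (1 + u * (1 - u)) / 2" using assms by simp
  also have "(1 - u) * (1 + u * (1 - u)) / 2 = 1/2 - prof u"
    by (simp add: prof_def field_simps power3_eq_cube power2_eq_square)
  finally show ?thesis by simp
qed

lemma prof_critical_values:
  assumes "\<bar>u\<bar> \<le> 1" "(1 - u^2) * (prof_deriv u)^2 = 0"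
  shows "prof u = 0 \<or> prof u = 1/2 \<or> prof u = 3/2"
proof -
  have "1 - u^2 = 0 \<or> prof_deriv u = 0"
    using assms(2) by simp
  moreover have "prof_deriv u = u * (2 - 3/2 * u)"
    by (simp add: prof_deriv_def power2_eq_square algebra_simps)
  ultimately have "u = 1 \<or> u = -1 \<or> u = 0 \<or> u = 4/3"
    by (auto simp: power2_eq_1_iff)
  then show ?thesis using assms(1) by (auto simp: prof_def)
qed

definition wave :: "real \<Rightarrow> real \<Rightarrow> real" where
  "wave \<sigma> t = prof (\<sigma> * cos (pi * t))"

definition wave_deriv :: "real \<Rightarrow> real \<Rightarrow> real" where
  "wave_deriv \<sigma> t = - pi * \<sigma> * prof_deriv (\<sigma> * cos (pi * t)) * sin (pi * t)"

definition wave_deriv2 :: "real \<Rightarrow> real \<Rightarrow> real" where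
  "wave_deriv2 \<sigma> t = pi^2 * (\<sigma>^2 * prof_deriv2 (\<sigma> * cos (pi * t)) * sin (pi * t)^2
      - \<sigma> * prof_deriv (\<sigma> * cos (pi * t)) * cos (pi * t))"

lemma wave_has_real_derivative [derivative_intros]:
  "(f has_real_derivative f') (at x within S) \<Longrightarrow>
    ((\<lambda>x. wave \<sigma> (f x)) has_real_derivative wave_deriv \<sigma> (f x) * f') (at x within S)"
  unfolding wave_def wave_deriv_def by (auto intro!: derivative_eq_intros simp: algebra_simps)

lemma wave_deriv_has_real_derivative [derivative_intros]:
  "(f has_real_derivative f') (at x within S) \<Longrightarrow>
    ((\<lambda>x. wave_deriv \<sigma> (f x)) has_real_derivative wave_deriv2 \<sigma> (f x) * f') (at x within S)"
  unfolding wave_deriv_def wave_deriv2_def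
  by (auto intro!: derivative_eq_intros simp: algebra_simps power2_eq_square)

lemma continuous_on_wave_deriv2: "continuous_on UNIV (wave_deriv2 \<sigma>)"
  unfolding wave_deriv2_def[abs_def] prof_deriv_def prof_deriv2_def by (intro continuous_intros)

lemma abs_wave_deriv2_le: "\<bar>wave_deriv2 1 t\<bar> \<le> 100"
proof -
  define c where "c = cos (pi * t)"
  define s where "s = sin (pi * t)"
  have c: "\<bar>c\<bar> \<le> 1" and s: "s^2 \<le> 1"
    by (simp_all add: c_def s_def abs_square_le_1)
  have "pi^2 \<le> 10"
    using pi_approx mult_mono[of pi "3.16" pi "3.16"] by (simp add: power2_eq_square)
  moreover have "\<bar>prof_deriv2 c\<bar> \<le> 5" "\<bar>prof_deriv c\<bar> \<le> 4"
  proof -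
    have "-1 \<le> c" "c \<le> 1" "0 \<le> c * c" "c * c \<le> 1"
      using c abs_square_le_1[of c] by (auto simp: power2_eq_square)
    then show "\<bar>prof_deriv2 c\<bar> \<le> 5" "\<bar>prof_deriv c\<bar> \<le> 4"
      unfolding prof_deriv_def prof_deriv2_def power2_eq_square abs_le_iff by linarith+
  qed
  ultimately have "\<bar>prof_deriv2 c * s^2\<bar> \<le> 5" "\<bar>prof_deriv c * c\<bar> \<le> 4" "pi^2 \<le> 10"
    using c s mult_mono[of "\<bar>prof_deriv2 c\<bar>" 5 "s^2" 1] mult_mono[of "\<bar>prof_deriv c\<bar>" 4 "\<bar>c\<bar>" 1]
    by (auto simp: abs_mult)
  then have "pi^2 * \<bar>prof_deriv2 c * s^2 - prof_deriv c * c\<bar> \<le> 10 * 9"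
    by (intro mult_mono) auto
  then show ?thesis
    by (simp add: wave_deriv2_def c_def[symmetric] s_def[symmetric] abs_mult)
qed

lemma wave_deriv_mult_nonneg:
  assumes "\<sigma> = 1 \<or> \<sigma> = -1"
  shows "0 \<le> wave_deriv \<sigma> t * wave_deriv 1 t"
proof -
  define u where "u = cos (pi * t)"
  have "0 \<le> \<sigma> * prof_deriv (\<sigma> * u) * prof_deriv u"
    using assms
  proof
    assume "\<sigma> = -1"
    have "u^2 \<le> 1" unfolding u_def by (simp add: abs_square_le_1)
    then have "0 \<le> u^2 * (4 - 9/4 * u^2)" by simp
    also have "u^2 * (4 - 9/4 * u^2) = \<sigma> * prof_deriv (\<sigma> * u) * prof_deriv u"
      unfolding \<open>\<sigma> = -1\<close> prof_deriv_def by algebra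
    finally show ?thesis .
  qed simp
  then have "0 \<le> (\<sigma> * prof_deriv (\<sigma> * u) * prof_deriv u) * (pi * sin (pi * t))^2"
    by simp
  then show ?thesis
    unfolding wave_deriv_def u_def[symmetric] by (simp add: power2_eq_square algebra_simps)
qed

definition cell_level :: "real^2 \<Rightarrow> real^2 \<Rightarrow> real" where
  "cell_level \<sigma> w = (\<Sum>i\<in>UNIV. wave (\<sigma>$i) (w$i))"

definition cell_level_grad :: "real^2 \<Rightarrow> real^2 \<Rightarrow> real^2" where
  "cell_level_grad \<sigma> w = (\<chi> i. wave_deriv (\<sigma>$i) (w$i))"

lemma cell_level_has_derivative: "(cell_level \<sigma> has_derivative (\<lambda>h. cell_level_grad \<sigma> w \<bullet> h)) (at w)"
proof -
  have "(wave (\<sigma>$i) has_real_derivative wave_deriv (\<sigma>$i) (w$i)) (at (w$i))" for i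
    using wave_has_real_derivative[OF DERIV_ident] by simp
  from has_derivative_separable[of "\<lambda>i. wave (\<sigma>$i)" "\<lambda>i. wave_deriv (\<sigma>$i)", OF this]
  show ?thesis unfolding cell_level_def[abs_def] cell_level_grad_def .
qed

lemma cell_level_le_one:
  assumes "\<forall>i. \<bar>w$i\<bar> \<le> 1/2"
  shows "cell_level 1 w \<le> 1"
proof -
  have "wave 1 (w$i) \<le> 1/2" for i
  proof -
    have "\<bar>pi * w$i\<bar> \<le> pi / 2"
      using assms mult_left_mono[of "\<bar>w$i\<bar>" "1/2" pi] by (simp add: abs_mult)
    then have "0 \<le> cos (pi * w$i)"
      unfolding abs_le_iff by (intro cos_ge_zero) linarith+
    then show ?thesis
      unfolding wave_def using prof_le_half[OF _ cos_le_one] by simp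
  qed
  from this[of 1] this[of 2] show ?thesis
    unfolding cell_level_def sum_2 one_index by linarith
qed

lemma cell_level_ge_three_halves:
  assumes "\<bar>w$j\<bar> = 1"
  shows "3/2 \<le> cell_level 1 w"
proof -
  have "w$j = 1 \<or> w$j = -1"
    using assms by arith
  then have "cos (pi * w$j) = -1"
    by auto
  then have j: "wave 1 (w$j) = 3/2"
    by (simp add: wave_def prof_def)
  have "0 \<le> wave 1 (w$i)" for i
    unfolding wave_def by (simp add: prof_nonneg)
  from this[of 1] this[of 2] j exhaust_2_cases[of j] show ?thesis
    unfolding cell_level_def sum_2 one_index by auto
qed

lemma prof_band_bounded_below:
  obtains d where "0 < d"
    "\<And>z :: real^2. z \<in> cbox (-1) 1 \<Longrightarrow> 9/8 \<le> (\<Sum>i\<in>UNIV. prof (z$i)) \<Longrightarrow> (\<Sum>i\<in>UNIV. prof (z$i)) \<le> 11/8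
      \<Longrightarrow> d \<le> (\<Sum>i\<in>UNIV. (1 - (z$i)^2) * (prof_deriv (z$i))^2)"
proof -
  define S where "S = cbox (-1) (1::real^2) \<inter> {z. 9/8 \<le> (\<Sum>i\<in>UNIV. prof (z$i)) \<and> (\<Sum>i\<in>UNIV. prof (z$i)) \<le> 11/8}"
  have "compact S"
    unfolding S_def prof_def
    by (intro compact_Int_closed compact_cbox closed_Collect_conj closed_Collect_le continuous_intros)
  moreover have "continuous_on S (\<lambda>z. \<Sum>i\<in>UNIV. (1 - (z$i)^2) * (prof_deriv (z$i))^2)"
    unfolding prof_deriv_def by (intro continuous_intros)
  moreover have "0 < (\<Sum>i\<in>UNIV. (1 - (z$i)^2) * (prof_deriv (z$i))^2)" if "z \<in> S" for z
  proof (rule ccontr)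
    assume "\<not> ?thesis"
    have z: "\<bar>z$i\<bar> \<le> 1" for i
      using that by (auto simp: S_def mem_box_cart abs_le_iff)
    then have "0 \<le> (1 - (z$i)^2) * (prof_deriv (z$i))^2" for i
      by (simp add: abs_square_le_1)
    from this[of 1] this[of 2] \<open>\<not> ?thesis\<close>
    have "(1 - (z$1)^2) * (prof_deriv (z$1))^2 = 0" "(1 - (z$2)^2) * (prof_deriv (z$2))^2 = 0"
      unfolding sum_2 by linarith+
    then have "(1 - (z$i)^2) * (prof_deriv (z$i))^2 = 0" for i
      using exhaust_2_cases[of i] by auto
    with z have "prof (z$i) = 0 \<or> prof (z$i) = 1/2 \<or> prof (z$i) = 3/2" for i
      by (intro prof_critical_values)
    from this[of 1] this[of 2] that show False by (auto simp: S_def sum_2)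
  qed
  ultimately obtain d where "0 < d" "\<And>z. z \<in> S \<Longrightarrow> d \<le> (\<Sum>i\<in>UNIV. (1 - (z$i)^2) * (prof_deriv (z$i))^2)"
    by (rule compact_continuous_pos_bounded_below) auto
  then show ?thesis
    using that by (auto simp: S_def)
qed

lemma norm_cell_level_grad_eq:
  "(norm (cell_level_grad 1 w))^2 = pi^2 * (\<Sum>i\<in>UNIV. (1 - (cos (pi * w$i))^2) * (prof_deriv (cos (pi * w$i)))^2)"
  by (simp add: power2_norm_eq_inner inner_vec_def cell_level_grad_def wave_deriv_def
      sin_squared_eq sum_distrib_left algebra_simps flip: power2_eq_square)

lemma cell_level_grad_bounded_below:
  obtains d where "0 < d"
    "\<And>w. 9/8 \<le> cell_level 1 w \<Longrightarrow> cell_level 1 w \<le> 11/8 \<Longrightarrow> d \<le> norm (cell_level_grad 1 w)"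
proof -
  obtain d where d: "0 < d"
    "\<And>z :: real^2. z \<in> cbox (-1) 1 \<Longrightarrow> 9/8 \<le> (\<Sum>i\<in>UNIV. prof (z$i)) \<Longrightarrow> (\<Sum>i\<in>UNIV. prof (z$i)) \<le> 11/8
      \<Longrightarrow> d \<le> (\<Sum>i\<in>UNIV. (1 - (z$i)^2) * (prof_deriv (z$i))^2)"
    by (rule prof_band_bounded_below) auto
  show ?thesis
  proof (rule that[of "sqrt d"])
    fix w assume "9/8 \<le> cell_level 1 w" "cell_level 1 w \<le> 11/8"
    then have "d \<le> (\<Sum>i\<in>UNIV. (1 - (cos (pi * w$i))^2) * (prof_deriv (cos (pi * w$i)))^2)"
      using d(2)[of "\<chi> i. cos (pi * w$i)"] by (simp add: cell_level_def wave_def mem_box_cart)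
    also have "\<dots> \<le> pi^2 * (\<Sum>i\<in>UNIV. (1 - (cos (pi * w$i))^2) * (prof_deriv (cos (pi * w$i)))^2)"
    proof -
      have "0 \<le> (\<Sum>i\<in>UNIV. (1 - (cos (pi * w$i))^2) * (prof_deriv (cos (pi * w$i)))^2)"
        by (intro sum_nonneg mult_nonneg_nonneg) (auto simp: abs_square_le_1)
      moreover have "1 \<le> pi^2" using pi_gt3 by (intro one_le_power) simp
      ultimately show ?thesis using mult_right_mono[of 1 "pi^2"] by simp
    qed
    also have "\<dots> = (norm (cell_level_grad 1 w))^2"
      by (rule norm_cell_level_grad_eq[symmetric])
    finally show "sqrt d \<le> norm (cell_level_grad 1 w)"
      by (simp add: real_le_lsqrt)
  qed (use d in simp)
qed

definition sign_vectors :: "(real^2) set" where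
  "sign_vectors = {\<sigma>. \<forall>i. \<sigma>$i = 1 \<or> \<sigma>$i = -1}"

lemma sign_vectors_eq_image:
  "sign_vectors = (\<lambda>(s1, s2). \<chi> i. if i = 1 then s1 else s2) ` ({-1, 1} \<times> {-1, 1})"
proof (intro equalityI subsetI)
  fix \<sigma> assume "\<sigma> \<in> sign_vectors"
  moreover have "\<sigma> = (\<chi> i. if i = 1 then \<sigma>$1 else \<sigma>$2)"
    using exhaust_2_cases by (auto simp: vec_eq_iff)
  ultimately show "\<sigma> \<in> (\<lambda>(s1, s2). \<chi> i. if i = 1 then s1 else s2) ` ({-1, 1} \<times> {-1, 1})"
    unfolding sign_vectors_def by (intro image_eqI[of _ _ "(\<sigma>$1, \<sigma>$2)"]) auto
qed (auto simp: sign_vectors_def split: if_splits)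

lemma finite_sign_vectors: "finite sign_vectors"
  by (simp add: sign_vectors_eq_image)

lemma card_sign_vectors_le: "card sign_vectors \<le> 4"
proof -
  have "card sign_vectors \<le> card ({-1, 1::real} \<times> {-1, 1::real})"
    unfolding sign_vectors_eq_image by (rule card_image_le) simp
  then show ?thesis by (simp add: card_cartesian_product)
qed

lemma one_in_sign_vectors: "1 \<in> sign_vectors"
  by (simp add: sign_vectors_def)

lemma sign_vectors_mult: "\<rho> \<in> sign_vectors \<Longrightarrow> \<sigma> \<in> sign_vectors \<Longrightarrow> \<rho> * \<sigma> \<in> sign_vectors"
  by (auto simp: sign_vectors_def) (metis mult_minus_left mult_1_left mult_1_right minus_minus)+

lemma sign_vectors_mult_self: "\<rho> \<in> sign_vectors \<Longrightarrow> \<rho> * (\<rho> * \<sigma>) = \<sigma>"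
  by (auto simp: sign_vectors_def vec_eq_iff) (metis mult_1_left mult_minus1 minus_minus)

lemma inner_cell_level_grad_nonneg:
  assumes "\<sigma> \<in> sign_vectors"
  shows "0 \<le> cell_level_grad \<sigma> w \<bullet> cell_level_grad 1 w"
  using assms wave_deriv_mult_nonneg
  by (auto simp: inner_vec_def cell_level_grad_def sign_vectors_def intro!: sum_nonneg)

lemma cell_level_add_int:
  assumes "\<forall>i. k$i \<in> \<int>"
  shows "cell_level \<sigma> (w + k) = cell_level ((\<chi> i. cos (pi * k$i)) * \<sigma>) w"
  unfolding cell_level_def wave_def using cos_pi_add_int(1)[OF assms[rule_format]]
  by (simp add: mult_ac)

definition cutoff :: "real \<Rightarrow> real \<Rightarrow> real" where
  "cutoff K s = exp (- exp (K * (s - 5/4)))"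

definition cutoff_deriv :: "real \<Rightarrow> real \<Rightarrow> real" where
  "cutoff_deriv K s = - K * exp (K * (s - 5/4)) * cutoff K s"

lemma cutoff_has_real_derivative: "(cutoff K has_real_derivative cutoff_deriv K s) (at s)"
  unfolding cutoff_def[abs_def] cutoff_deriv_def
  by (auto intro!: derivative_eq_intros)

lemma cutoff_deriv_nonpos: "0 \<le> K \<Longrightarrow> cutoff_deriv K s \<le> 0"
  by (simp add: cutoff_deriv_def cutoff_def)

lemma cutoff_deriv_le:
  assumes "0 < K" "\<bar>s - 5/4\<bar> \<le> 1/K"
  shows "cutoff_deriv K s \<le> - K / 81"
proof -
  define x where "x = K * (s - 5/4)"
  have "\<bar>x\<bar> \<le> 1"
    using assms mult_left_mono[OF assms(2), of K] by (simp add: x_def abs_mult)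
  then have x: "-1 \<le> x" "x \<le> 1" by auto
  have "1/3 \<le> exp (-1::real)"
    using exp_le by (simp add: exp_minus field_simps)
  also have "\<dots> \<le> exp x" using x by simp
  finally have exp_lower: "1/3 \<le> exp x" .
  have "exp (3::real) = exp 1 ^ 3" by (simp flip: exp_of_nat_mult)
  also have "\<dots> \<le> 3^3" using exp_le by (intro power_mono) auto
  finally have "1/27 \<le> exp (-3::real)" by (simp add: exp_minus field_simps)
  also have "\<dots> \<le> exp (- exp x)"
    using x exp_le order_trans[of "exp x" "exp 1" 3] by simp
  finally have "1/81 \<le> exp x * exp (- exp x)"
    using mult_mono[OF exp_lower] by fastforce
  then have "K * (1/81) \<le> K * (exp x * exp (- exp x))"
    using assms(1) by (intro mult_left_mono) auto
  then show ?thesis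
    unfolding cutoff_deriv_def cutoff_def x_def[symmetric] by (simp add: algebra_simps)
qed

(* Since prof (- cos (pi t)) = prof (cos (pi (t + 1))), the four sign vectors give the translates of
   cell_level 1 by {0,1}^2; their sum is Z^2-periodic although cell_level 1 is only 2Z^2-periodic. *)
definition pinning_coeff :: "real \<Rightarrow> real \<Rightarrow> real^2 \<Rightarrow> real" where
  "pinning_coeff c K w = 1 + c * (\<Sum>\<sigma>\<in>sign_vectors. cutoff K (cell_level \<sigma> w))"

lemma pinning_coeff_trig_exp: "pinning_coeff c K \<in> trig_exp"
  unfolding pinning_coeff_def[abs_def] cutoff_def cell_level_def wave_def prof_def
  by (intro trig_exp.intros trig_exp_sum finite_sign_vectors) simp

lemma pinning_coeff_range:
  assumes "c \<ge> 0"
  shows "1 \<le> pinning_coeff c K w" and "pinning_coeff c K w \<le> 1 + 4 * c"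
proof -
  define S where "S = (\<Sum>\<sigma>\<in>sign_vectors. cutoff K (cell_level \<sigma> w))"
  have "0 \<le> S" unfolding S_def cutoff_def by (intro sum_nonneg) simp
  moreover have "S \<le> 4"
  proof -
    have "S \<le> of_nat (card sign_vectors) * 1"
      unfolding S_def cutoff_def by (intro sum_bounded_above) simp
    also have "\<dots> \<le> 4" using card_sign_vectors_le by simp
    finally show ?thesis .
  qed
  ultimately show "1 \<le> pinning_coeff c K w" "pinning_coeff c K w \<le> 1 + 4 * c"
    unfolding pinning_coeff_def S_def[symmetric] using assms mult_left_mono[of S 4 c] by (simp_all add: mult.commute)
qed

lemma pinning_coeff_periodic2: "periodic2 (pinning_coeff c K)"
  unfolding periodic2_def
proof (intro allI impI)
  fix w k :: "real^2" assume k: "\<forall>i. k$i \<in> \<int>"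
  define \<rho> where "\<rho> = (\<chi> i. cos (pi * k$i))"
  have \<rho>: "\<rho> \<in> sign_vectors"
    unfolding \<rho>_def sign_vectors_def using cos_pi_add_int(2) k by simp
  have "(\<Sum>\<sigma>\<in>sign_vectors. cutoff K (cell_level (\<rho> * \<sigma>) w)) = (\<Sum>\<sigma>\<in>sign_vectors. cutoff K (cell_level \<sigma> w))"
    by (rule sum.reindex_bij_witness[of _ "(*) \<rho>" "(*) \<rho>"])
      (use \<rho> sign_vectors_mult sign_vectors_mult_self in auto)
  then show "pinning_coeff c K (w + k) = pinning_coeff c K w"
    unfolding pinning_coeff_def cell_level_add_int[OF k] \<rho>_def by simp
qed

lemma grad_pinning_coeff:
  "grad (pinning_coeff c K) w
    = c *\<^sub>R (\<Sum>\<sigma>\<in>sign_vectors. cutoff_deriv K (cell_level \<sigma> w) *\<^sub>R cell_level_grad \<sigma> w)"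
proof (rule grad_eqI)
  have "((\<lambda>w. cutoff K (cell_level \<sigma> w)) has_derivative
      (\<lambda>h. (cutoff_deriv K (cell_level \<sigma> w) *\<^sub>R cell_level_grad \<sigma> w) \<bullet> h)) (at w)" for \<sigma>
    using DERIV_compose_FDERIV[OF cutoff_has_real_derivative cell_level_has_derivative]
    by (simp add: mult.commute)
  then show "(pinning_coeff c K has_derivative
      (\<lambda>h. (c *\<^sub>R (\<Sum>\<sigma>\<in>sign_vectors. cutoff_deriv K (cell_level \<sigma> w) *\<^sub>R cell_level_grad \<sigma> w)) \<bullet> h)) (at w)"
    unfolding pinning_coeff_def[abs_def]
    by (auto intro!: derivative_eq_intros simp: inner_sum_left)
qed

lemma inner_grad_pinning_coeff_le:
  assumes "0 \<le> c" "0 \<le> K"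
  shows "grad (pinning_coeff c K) w \<bullet> cell_level_grad 1 w
    \<le> c * cutoff_deriv K (cell_level 1 w) * (norm (cell_level_grad 1 w))^2"
proof -
  let ?term = "\<lambda>\<sigma>. cutoff_deriv K (cell_level \<sigma> w) * (cell_level_grad \<sigma> w \<bullet> cell_level_grad 1 w)"
  have "grad (pinning_coeff c K) w \<bullet> cell_level_grad 1 w = c * (\<Sum>\<sigma>\<in>sign_vectors. ?term \<sigma>)"
    by (simp add: grad_pinning_coeff inner_sum_left)
  also have "(\<Sum>\<sigma>\<in>sign_vectors. ?term \<sigma>) = ?term 1 + (\<Sum>\<sigma>\<in>sign_vectors - {1}. ?term \<sigma>)"
    by (rule sum.remove[OF finite_sign_vectors one_in_sign_vectors])
  also have "\<dots> \<le> ?term 1 + 0"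
    using assms(2) cutoff_deriv_nonpos inner_cell_level_grad_nonneg
    by (intro add_left_mono sum_nonpos mult_nonpos_nonneg) auto
  finally show ?thesis
    using assms(1) by (simp add: mult_left_mono power2_norm_eq_inner mult.assoc)
qed

section \<open>Barriers on lattice cells\<close>

definition cell_coord :: "real \<Rightarrow> real^2 \<Rightarrow> real^2 \<Rightarrow> real^2" where
  "cell_coord e m x = (1/e) *\<^sub>R x - m"

definition cell :: "real \<Rightarrow> real^2 \<Rightarrow> real \<Rightarrow> (real^2) set" where
  "cell e m r = {x. \<forall>i. \<bar>cell_coord e m x $ i\<bar> \<le> r}"

lemma cell_eq_cbox:
  assumes "0 < e"
  shows "cell e m r = cbox (\<chi> i. e * (m$i - r)) (\<chi> i. e * (m$i + r))"
proof -
  have "\<bar>x$i / e - m$i\<bar> \<le> r \<longleftrightarrow> e * (m$i - r) \<le> x$i \<and> x$i \<le> e * (m$i + r)" for x :: "real^2" and i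
    using assms by (auto simp: abs_le_iff field_simps)
  then show ?thesis
    by (auto simp: cell_def cell_coord_def mem_box_cart divide_inverse mult.commute)
qed

lemma cell_mono: "r \<le> r' \<Longrightarrow> cell e m r \<subseteq> cell e m r'"
  by (auto simp: cell_def intro: order_trans)

lemma compact_cell: "0 < e \<Longrightarrow> compact (cell e m r)"
  by (simp add: cell_eq_cbox)

lemma dist_le_in_cell:
  assumes "0 < e" "x \<in> cell e m (1/2)" "y \<in> cell e m 1"
  shows "dist y x \<le> 3 * e"
proof -
  have "\<bar>(y - x)$i\<bar> \<le> 3/2 * e" for i
  proof -
    have "(y - x)$i = e * (cell_coord e m y $ i - cell_coord e m x $ i)"
      using assms(1) by (simp add: cell_coord_def field_simps)
    moreover have "\<bar>cell_coord e m x $ i\<bar> \<le> 1/2" "\<bar>cell_coord e m y $ i\<bar> \<le> 1"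
      using assms(2,3) by (simp_all add: cell_def)
    then have "\<bar>cell_coord e m y $ i - cell_coord e m x $ i\<bar> \<le> 3/2"
      by arith
    ultimately show ?thesis
      using assms(1) by (simp add: abs_mult)
  qed
  have "dist y x \<le> \<bar>(y - x)$1\<bar> + \<bar>(y - x)$2\<bar>"
    using norm_le_l1_cart[of "y - x"] by (simp add: dist_norm sum_2)
  also have "\<dots> \<le> 3/2 * e + 3/2 * e"
    by (intro add_mono) fact+
  finally show ?thesis by simp
qed

lemma exists_cell_containing:
  assumes "0 < e"
  obtains m :: "real^2" where "\<forall>i. m$i \<in> \<int>" "x \<in> cell e m (1/2)"
proof
  let ?m = "\<chi> i. (of_int \<lfloor>x$i / e + 1/2\<rfloor> :: real)"
  show "\<forall>i. ?m$i \<in> \<int>" by simp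
  show "x \<in> cell e ?m (1/2)"
  proof -
    have "\<bar>x$i / e - of_int \<lfloor>x$i / e + 1/2\<rfloor>\<bar> \<le> 1/2" for i
      using of_int_floor_le[of "x$i / e + 1/2"] real_of_int_floor_add_one_gt[of "x$i / e + 1/2"]
      unfolding abs_le_iff by linarith
    then show ?thesis by (simp add: cell_def cell_coord_def)
  qed
qed

lemma continuous_on_cell_coord: "continuous_on UNIV (cell_coord e m)"
  unfolding cell_coord_def by (intro continuous_on_diff continuous_on_scaleR continuous_on_const continuous_on_id)

definition rescaled_level :: "real \<Rightarrow> real^2 \<Rightarrow> real^2 \<Rightarrow> real" where
  "rescaled_level e m x = cell_level 1 (cell_coord e m x)"

definition rescaled_level_grad :: "real \<Rightarrow> real^2 \<Rightarrow> real^2 \<Rightarrow> real^2" where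
  "rescaled_level_grad e m x = (1/e) *\<^sub>R cell_level_grad 1 (cell_coord e m x)"

definition rescaled_level_hess :: "real \<Rightarrow> real^2 \<Rightarrow> real^2 \<Rightarrow> real^2^2" where
  "rescaled_level_hess e m x =
     (\<chi> i j. if i = j then wave_deriv2 1 (cell_coord e m x $ i) / e^2 else 0)"

lemma wave_rescaled_has_real_derivative:
  "((\<lambda>s. wave 1 ((1/e) * s - r)) has_real_derivative wave_deriv 1 ((1/e) * s - r) / e) (at s)"
  by (auto intro!: derivative_eq_intros simp: divide_inverse)

lemma rescaled_level_has_derivative:
  "(rescaled_level e m has_derivative (\<lambda>h. rescaled_level_grad e m x \<bullet> h)) (at x)"
proof -
  have "((\<lambda>y. \<Sum>i\<in>UNIV. wave 1 ((1/e) * y$i - m$i)) has_derivative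
      (\<lambda>h. (\<chi> i. wave_deriv 1 ((1/e) * x$i - m$i) / e) \<bullet> h)) (at x)"
    by (rule has_derivative_separable) (rule wave_rescaled_has_real_derivative)
  then show ?thesis
    by (simp add: rescaled_level_def[abs_def] rescaled_level_grad_def cell_level_def cell_level_grad_def
        cell_coord_def scaleR_vec_def divide_inverse mult.commute)
qed

lemma rescaled_level_grad_has_derivative:
  "(rescaled_level_grad e m has_derivative (\<lambda>h. rescaled_level_hess e m x *v h)) (at x)"
proof -
  have "((\<lambda>s. wave_deriv 1 ((1/e) * s - r) / e) has_real_derivative wave_deriv2 1 ((1/e) * s - r) / e^2) (at s)"
    for r s
    by (auto intro!: derivative_eq_intros simp: divide_inverse power2_eq_square)
  moreover have "rescaled_level_grad e m = (\<lambda>y. \<chi> i. wave_deriv 1 ((1/e) * y$i - m$i) / e)"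
    by (simp add: fun_eq_iff vec_eq_iff rescaled_level_grad_def cell_level_grad_def cell_coord_def)
  moreover have "rescaled_level_hess e m x
      = (\<chi> i j. if i = j then wave_deriv2 1 ((1/e) * x$i - m$i) / e^2 else 0)"
    by (simp add: vec_eq_iff rescaled_level_hess_def cell_coord_def)
  ultimately show ?thesis
    using has_derivative_separable_grad[of "\<lambda>i s. wave_deriv 1 ((1/e) * s - m$i) / e"
        "\<lambda>i s. wave_deriv2 1 ((1/e) * s - m$i) / e^2"]
    by simp
qed

lemma continuous_on_rescaled_level: "continuous_on UNIV (rescaled_level e m)"
  using rescaled_level_has_derivative has_derivative_continuous
  by (intro continuous_at_imp_continuous_on) blast

lemma continuous_on_rescaled_level_grad: "continuous_on UNIV (rescaled_level_grad e m)"
  using rescaled_level_grad_has_derivative has_derivative_continuous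
  by (intro continuous_at_imp_continuous_on) blast

lemma continuous_on_rescaled_level_hess: "continuous_on UNIV (rescaled_level_hess e m)"
proof -
  have "continuous_on UNIV (\<lambda>x. wave_deriv2 1 (cell_coord e m x $ i))" for i
    by (rule continuous_on_compose2[OF continuous_on_wave_deriv2])
      (auto intro: continuous_on_component continuous_on_cell_coord)
  then have "continuous_on UNIV (\<lambda>x. if i = j then wave_deriv2 1 (cell_coord e m x $ i) / e^2 else 0)" for i j
    by (cases "i = j") (auto simp: divide_inverse intro!: continuous_intros)
  then show ?thesis
    unfolding rescaled_level_hess_def by (intro continuous_on_vec_lambda)
qed

definition barrier :: "real \<Rightarrow> real^2 \<Rightarrow> real \<Rightarrow> real \<Rightarrow> real^2 \<Rightarrow> real" where
  "barrier e m M b x = M * (max 0 (rescaled_level e m x - b))^3"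

definition barrier_grad :: "real \<Rightarrow> real^2 \<Rightarrow> real \<Rightarrow> real \<Rightarrow> real^2 \<Rightarrow> real^2" where
  "barrier_grad e m M b x = (3 * M * (max 0 (rescaled_level e m x - b))^2) *\<^sub>R rescaled_level_grad e m x"

definition barrier_hess :: "real \<Rightarrow> real^2 \<Rightarrow> real \<Rightarrow> real \<Rightarrow> real^2 \<Rightarrow> real^2^2" where
  "barrier_hess e m M b x =
     (\<chi> i j. 6 * M * max 0 (rescaled_level e m x - b) * rescaled_level_grad e m x $ i * rescaled_level_grad e m x $ j
        + 3 * M * (max 0 (rescaled_level e m x - b))^2 * rescaled_level_hess e m x $ i $ j)"

lemma barrier_has_derivative:
  "(barrier e m M b has_derivative (\<lambda>h. barrier_grad e m M b x \<bullet> h)) (at x)"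
proof -
  have "((\<lambda>s. M * (max 0 (s - b))^3) has_real_derivative 3 * M * (max 0 (s - b))^2) (at s)" for s
    using DERIV_cmult[OF pos_part_power_has_real_derivative[of 3 b s], of M] by (simp add: mult_ac)
  from DERIV_compose_FDERIV[OF this rescaled_level_has_derivative]
  show ?thesis
    unfolding barrier_def[abs_def] barrier_grad_def by (simp add: mult.commute)
qed

lemma barrier_grad_has_derivative:
  "(barrier_grad e m M b has_derivative (\<lambda>h. barrier_hess e m M b x *v h)) (at x)"
proof -
  have "((\<lambda>s. 3 * M * (max 0 (s - b))^2) has_real_derivative 6 * M * max 0 (s - b)) (at s)" for s
    using DERIV_cmult[OF pos_part_power_has_real_derivative[of 2 b s], of "3 * M"] by (simp add: mult_ac)
  from has_derivative_scaleR_grad_comp[of "\<lambda>s. 3 * M * (max 0 (s - b))^2" "\<lambda>s. 6 * M * max 0 (s - b)",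
      OF this rescaled_level_has_derivative rescaled_level_grad_has_derivative]
  show ?thesis
    unfolding barrier_grad_def[abs_def] barrier_hess_def .
qed

lemma continuous_on_barrier_hess: "continuous_on UNIV (barrier_hess e m M b)"
  unfolding barrier_hess_def
  using continuous_on_rescaled_level continuous_on_rescaled_level_grad continuous_on_rescaled_level_hess
  by (intro continuous_on_vec_lambda) (auto intro!: continuous_intros)

lemma barrier_nonneg: "0 \<le> M \<Longrightarrow> 0 \<le> barrier e m M b x"
  by (simp add: barrier_def)

lemma barrier_eq_0: "rescaled_level e m x \<le> b \<Longrightarrow> barrier e m M b x = 0"
  by (simp add: barrier_def)

lemma barrier_ge:
  assumes "0 \<le> M" "0 \<le> \<delta>" "b + \<delta> \<le> rescaled_level e m x"
  shows "M * \<delta>^3 \<le> barrier e m M b x"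
  unfolding barrier_def using assms by (intro mult_left_mono power_mono) auto

lemma barrier_grad_eq:
  "barrier_grad e m M b x
    = (3 * M * (max 0 (rescaled_level e m x - b))^2 / e) *\<^sub>R cell_level_grad 1 (cell_coord e m x)"
  by (simp add: barrier_grad_def rescaled_level_grad_def)

lemma mc_term_barrier_hess_le:
  fixes e m M b x
  defines "v \<equiv> cell_level_grad 1 (cell_coord e m x)"
  assumes M: "0 \<le> M" and v: "v \<noteq> 0"
  shows "mc_term (barrier_hess e m M b x) ((1 / norm v) *\<^sub>R v)
    \<le> 3 * M * (max 0 (rescaled_level e m x - b))^2 / e / e * 100"
proof (rule mc_term_rank_one_plus_diag_le[OF v _ abs_wave_deriv2_le])
  show "barrier_hess e m M b x $ i $ j
      = 6 * M * max 0 (rescaled_level e m x - b) / e^2 * v$i * v$j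
        + 3 * M * (max 0 (rescaled_level e m x - b))^2 / e / e
          * (if i = j then wave_deriv2 1 (cell_coord e m x $ i) else 0)" for i j
    by (simp add: barrier_hess_def rescaled_level_grad_def rescaled_level_hess_def v_def power2_eq_square)
qed (use M in simp)

lemma rescaled_level_le_one: "x \<in> cell e m (1/2) \<Longrightarrow> rescaled_level e m x \<le> 1"
  unfolding rescaled_level_def by (intro cell_level_le_one) (simp add: cell_def)

lemma rescaled_level_ge_off_interior:
  assumes "x \<in> cell e m 1" "\<not> (\<forall>i. \<bar>cell_coord e m x $ i\<bar> < 1)"
  shows "3/2 \<le> rescaled_level e m x"
proof -
  obtain j where "1 \<le> \<bar>cell_coord e m x $ j\<bar>"
    using assms(2) by (auto simp: not_less)
  with assms(1) have "\<bar>cell_coord e m x $ j\<bar> = 1"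
    by (simp add: cell_def order_antisym)
  then show ?thesis
    unfolding rescaled_level_def by (rule cell_level_ge_three_halves)
qed

lemma open_cell_interior_sublevel:
  "open {x. (\<forall>i. \<bar>cell_coord e m x $ i\<bar> < 1) \<and> rescaled_level e m x < b}"
proof -
  have "{x. (\<forall>i. \<bar>cell_coord e m x $ i\<bar> < 1) \<and> rescaled_level e m x < b}
      = (\<Inter>i. {x. \<bar>cell_coord e m x $ i\<bar> < 1}) \<inter> {x. rescaled_level e m x < b}"
    by auto
  moreover have "open {x. \<bar>cell_coord e m x $ i\<bar> < 1}" for i
    using continuous_on_cell_coord
    by (intro open_Collect_less continuous_on_const continuous_on_rabs continuous_on_component) auto
  moreover have "open {x. rescaled_level e m x < b}"
    by (intro open_Collect_less continuous_on_rescaled_level continuous_on_const)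
  ultimately show ?thesis
    by (simp add: open_Int open_INT)
qed

lemma time_penalty_has_real_derivative:
  "((\<lambda>s. l + \<eta> * s + L * (max 0 (s - t))^2) has_real_derivative \<eta> + 2 * L * max 0 (s - t)) (at s)"
  using DERIV_add[OF DERIV_add[OF DERIV_const DERIV_cmult[OF DERIV_ident]]
      DERIV_cmult[OF pos_part_power_has_real_derivative[of 2 t s]], of l \<eta> L]
  by (simp add: mult_ac)

lemma barrier_test_fn:
  "test_fn (\<lambda>x s. barrier e m M b x + (l + \<eta> * s + L * (max 0 (s - t))^2))
     (\<lambda>x s. \<eta> + 2 * L * max 0 (s - t)) (\<lambda>x s. barrier_grad e m M b x) (\<lambda>x s. barrier_hess e m M b x)"
  by (rule test_fn_separable[OF time_penalty_has_real_derivative _ barrier_has_derivative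
        barrier_grad_has_derivative continuous_on_barrier_hess])
    (intro continuous_intros)

section \<open>Pinning\<close>

(* In K_large, 100 bounds the curvature of the level sets of the barrier (abs_wave_deriv2_le),
   1 + 4 c bounds the coefficient, and - K/81 bounds the slope of the cutoff in the band
   (cutoff_deriv_le). *)
locale pinning_params =
  fixes c K d :: real
  assumes c_pos: "0 < c" and K_ge_8: "8 \<le> K" and d_pos: "0 < d"
    and grad_lower: "\<And>w. 9/8 \<le> cell_level 1 w \<Longrightarrow> cell_level 1 w \<le> 11/8 \<Longrightarrow> d \<le> norm (cell_level_grad 1 w)"
    and K_large: "100 * (1 + 4 * c) / d^2 + 1 / d \<le> c * K / 81"
begin

lemma norm_cell_level_grad_ge:
  assumes "\<bar>cell_level 1 w - 5/4\<bar> \<le> 1/K"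
  shows "d \<le> norm (cell_level_grad 1 w)"
proof -
  have "1/K \<le> 1/8" using K_ge_8 by (simp add: field_simps)
  with assms show ?thesis by (intro grad_lower) (auto simp: abs_le_iff)
qed

lemma drift_dominates:
  assumes F: "\<bar>F\<bar> < 1" and band: "\<bar>cell_level 1 w - 5/4\<bar> \<le> 1/K"
  shows "100 * (1 + 4 * c) + grad (pinning_coeff c K) w \<bullet> cell_level_grad 1 w
    + \<bar>F\<bar> * norm (cell_level_grad 1 w) \<le> 0"
proof -
  define N where "N = norm (cell_level_grad 1 w)"
  have dN: "d \<le> N" unfolding N_def using band by (rule norm_cell_level_grad_ge)
  have "grad (pinning_coeff c K) w \<bullet> cell_level_grad 1 w \<le> c * cutoff_deriv K (cell_level 1 w) * N^2"
    unfolding N_def using c_pos K_ge_8 by (intro inner_grad_pinning_coeff_le) auto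
  also have "\<dots> \<le> c * (- K / 81) * N^2"
    using cutoff_deriv_le[OF _ band] K_ge_8 c_pos by (intro mult_right_mono mult_left_mono) auto
  finally have drift: "grad (pinning_coeff c K) w \<bullet> cell_level_grad 1 w \<le> - (c * K / 81 * N^2)"
    by simp
  have "1 \<le> (N / d)^2"
    using dN d_pos by (simp add: field_simps power2_eq_square mult_mono)
  then have curv: "100 * (1 + 4 * c) \<le> 100 * (1 + 4 * c) / d^2 * N^2"
    using c_pos mult_left_mono[of 1 "(N / d)^2" "100 * (1 + 4 * c)"] by (simp add: power_divide)
  have "\<bar>F\<bar> * N \<le> N" using F dN d_pos by (simp add: mult_left_le_one_le)
  also have "N \<le> 1 / d * N^2"
    using dN d_pos by (simp add: field_simps power2_eq_square mult_right_mono)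
  finally have force: "\<bar>F\<bar> * N \<le> 1 / d * N^2" .
  have "100 * (1 + 4 * c) / d^2 * N^2 + 1 / d * N^2 \<le> c * K / 81 * N^2"
    using mult_right_mono[OF K_large, of "N^2"] by (simp add: distrib_right)
  with drift curv force show ?thesis
    unfolding N_def[symmetric] by linarith
qed

lemma H_upper_barrier_nonpos:
  assumes F: "\<bar>F\<bar> < 1" and e: "0 < e" and M: "0 < M" and m: "\<forall>i. m$i \<in> \<int>"
    and below: "rescaled_level e m x < 5/4 + 1/K"
  shows "H_upper (pinning_coeff c K) e F x
    (barrier_grad e m M (5/4 - 1/K) x) (barrier_hess e m M (5/4 - 1/K) x) \<le> 0"
proof (cases "rescaled_level e m x \<le> 5/4 - 1/K")
  case True
  then have "barrier_grad e m M (5/4 - 1/K) x = 0" "barrier_hess e m M (5/4 - 1/K) x = 0"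
    by (simp_all add: barrier_grad_def barrier_hess_def vec_eq_iff)
  then show ?thesis by (simp add: H_upper_zero)
next
  case False
  define w where "w = cell_coord e m x"
  define v where "v = cell_level_grad 1 w"
  define \<kappa> where "\<kappa> = 3 * M * (rescaled_level e m x - (5/4 - 1/K))^2 / e"
  have \<kappa>: "0 < \<kappa>" using False M e by (simp add: \<kappa>_def)
  have band: "\<bar>cell_level 1 w - 5/4\<bar> \<le> 1/K"
    using False below by (simp add: w_def rescaled_level_def abs_le_iff)
  then have "v \<noteq> 0" using norm_cell_level_grad_ge[OF band] d_pos by (auto simp: v_def)
  have grad: "barrier_grad e m M (5/4 - 1/K) x = \<kappa> *\<^sub>R v"
    using False by (simp add: barrier_grad_eq \<kappa>_def v_def w_def)
  have mc: "mc_term (barrier_hess e m M (5/4 - 1/K) x) ((1 / norm v) *\<^sub>R v) \<le> \<kappa> / e * 100"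
    using mc_term_barrier_hess_le[where e = e and m = m and M = M and b = "5/4 - 1/K" and x = x]
      M \<open>v \<noteq> 0\<close> False
    by (simp add: \<kappa>_def v_def w_def)
  have "(1/e) *\<^sub>R x = w + m" by (simp add: w_def cell_coord_def)
  then have Da: "grad (pinning_coeff c K) ((1/e) *\<^sub>R x) = grad (pinning_coeff c K) w"
    using grad_periodic2[OF pinning_coeff_periodic2 m] by simp
  have "0 \<le> pinning_coeff c K ((1/e) *\<^sub>R x)" "pinning_coeff c K ((1/e) *\<^sub>R x) \<le> 1 + 4 * c"
    using pinning_coeff_range[of c K "(1/e) *\<^sub>R x"] c_pos by auto
  from H_upper_scaleR_le[where a = "pinning_coeff c K", OF \<kappa> \<open>v \<noteq> 0\<close> e zero_le_numeral this mc]
  have "H_upper (pinning_coeff c K) e F x (barrier_grad e m M (5/4 - 1/K) x) (barrier_hess e m M (5/4 - 1/K) x)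
      \<le> \<kappa> / e * ((1 + 4 * c) * 100 + grad (pinning_coeff c K) w \<bullet> v + \<bar>F\<bar> * norm v)"
    unfolding grad Da by simp
  also have "\<dots> \<le> 0"
    using drift_dominates[OF F band] \<kappa> e unfolding v_def by (intro mult_nonneg_nonpos) (auto simp: mult.commute)
  finally show ?thesis .
qed

lemma barrier_ge_off_sublevel:
  assumes "0 \<le> L" "y \<in> cell e m 1"
    and "\<not> ((\<forall>i. \<bar>cell_coord e m y $ i\<bar> < 1) \<and> rescaled_level e m y < 5/4 + 1/K)"
  shows "L \<le> barrier e m (L / (2/K)^3) (5/4 - 1/K) y"
proof -
  have "5/4 + 1/K \<le> rescaled_level e m y"
  proof (cases "\<forall>i. \<bar>cell_coord e m y $ i\<bar> < 1")
    case False
    moreover have "1/K \<le> 1/8" using K_ge_8 by (simp add: field_simps)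
    ultimately show ?thesis using rescaled_level_ge_off_interior[OF assms(2)] by simp
  qed (use assms(3) in simp)
  then show ?thesis
    using barrier_ge[of "L / (2/K)^3" "2/K" "5/4 - 1/K"] assms(1) K_ge_8 by simp
qed

(* loc_max_at is two-sided in time, so a maximum at the final time would not contradict the
   subsolution property: the comparison runs up to t + 1, where the penalty L ((s - t)_+)^2
   already dominates u. *)
lemma visc_sub_le_barrier:
  assumes F: "\<bar>F\<bar> < 1" and e: "0 < e" and cont: "continuous_on (UNIV \<times> {0..}) (\<lambda>z. u (fst z) (snd z))"
    and sub: "visc_sub (pinning_coeff c K) e F u" and m: "\<forall>i. m$i \<in> \<int>"
    and initial: "\<And>y. y \<in> cell e m 1 \<Longrightarrow> u y 0 \<le> l"
    and bound: "\<And>y s. y \<in> cell e m 1 \<Longrightarrow> 0 \<le> s \<Longrightarrow> s \<le> t + 1 \<Longrightarrow> u y s \<le> l + L"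
    and L: "0 < L" and t: "0 \<le> t" and \<eta>: "0 < \<eta>"
    and x: "x \<in> cell e m 1" and s: "0 \<le> s" "s \<le> t + 1"
  shows "u x s \<le> barrier e m (L / (2/K)^3) (5/4 - 1/K) x + (l + \<eta> * s + L * (max 0 (s - t))^2)"
proof -
  define M where "M = L / (2/K)^3"
  define I where "I = {y. (\<forall>i. \<bar>cell_coord e m y $ i\<bar> < 1) \<and> rescaled_level e m y < 5/4 + 1/K}"
  have M: "0 < M" using K_ge_8 L by (simp add: M_def)
  show ?thesis
    unfolding M_def[symmetric]
  proof (rule visc_sub_le_strict_supersolution[OF sub cont barrier_test_fn compact_cell[OF e]
        open_cell_interior_sublevel[of e m "5/4 + 1/K", folded I_def] _ _ _ _ _ x s])
    show "I \<subseteq> cell e m 1"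
      by (auto simp: I_def cell_def less_imp_le)
  next
    fix y s assume "y \<in> I" "0 < s" "s < t + 1"
    then have "H_upper (pinning_coeff c K) e F y (barrier_grad e m M (5/4 - 1/K) y)
        (barrier_hess e m M (5/4 - 1/K) y) \<le> 0"
      by (intro H_upper_barrier_nonpos F e M m) (simp add: I_def)
    also have "0 < \<eta> + 2 * L * max 0 (s - t)"
      using \<eta> L by (simp add: add_pos_nonneg)
    finally show "H_upper (pinning_coeff c K) e F y (barrier_grad e m M (5/4 - 1/K) y)
        (barrier_hess e m M (5/4 - 1/K) y) < \<eta> + 2 * L * max 0 (s - t)" .
  next
    fix y assume "y \<in> cell e m 1"
    then show "u y 0 \<le> barrier e m M (5/4 - 1/K) y + (l + \<eta> * 0 + L * (max 0 (0 - t))^2)"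
      using initial[of y] barrier_nonneg[of M e m "5/4 - 1/K" y] M t by simp
  next
    fix y assume "y \<in> cell e m 1"
    moreover have "0 \<le> \<eta> * (t + 1)" using \<eta> t by simp
    ultimately show "u y (t + 1) \<le> barrier e m M (5/4 - 1/K) y + (l + \<eta> * (t + 1) + L * (max 0 (t + 1 - t))^2)"
      using bound[of y "t + 1"] barrier_nonneg[of M e m "5/4 - 1/K" y] M t by simp
  next
    fix y s assume y: "y \<in> cell e m 1" "y \<notin> I" and s: "0 \<le> s" "s \<le> t + 1"
    have "L \<le> barrier e m M (5/4 - 1/K) y"
      using barrier_ge_off_sublevel[of L y e m] L y unfolding I_def M_def by simp
    moreover have "0 \<le> \<eta> * s" "0 \<le> L * (max 0 (s - t))^2"
      using \<eta> s L by simp_all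
    ultimately show "u y s \<le> barrier e m M (5/4 - 1/K) y + (l + \<eta> * s + L * (max 0 (s - t))^2)"
      using bound[OF y(1) s] by simp
  qed
qed

lemma visc_sub_cell_bound_slack:
  assumes F: "\<bar>F\<bar> < 1" and e: "0 < e" and cont: "continuous_on (UNIV \<times> {0..}) (\<lambda>z. u (fst z) (snd z))"
    and sub: "visc_sub (pinning_coeff c K) e F u" and m: "\<forall>i. m$i \<in> \<int>"
    and x: "x \<in> cell e m (1/2)" and initial: "\<And>y. y \<in> cell e m 1 \<Longrightarrow> u y 0 \<le> l"
    and t: "0 \<le> t" and \<eta>: "0 < \<eta>"
  shows "u x t \<le> l + \<eta> * t"
proof -
  have "compact ((\<lambda>z. u (fst z) (snd z)) ` (cell e m 1 \<times> {0..t + 1}))"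
    using e by (intro compact_continuous_image continuous_on_subset[OF cont] compact_Times compact_cell) auto
  then obtain U where "\<forall>z\<in>(\<lambda>z. u (fst z) (snd z)) ` (cell e m 1 \<times> {0..t + 1}). \<bar>z\<bar> \<le> U"
    using compact_imp_bounded bounded_real by blast
  then have bound: "u y s \<le> l + max 1 (U - l)" if "y \<in> cell e m 1" "0 \<le> s" "s \<le> t + 1" for y s
    using that by force
  have "x \<in> cell e m 1" using cell_mono[of "1/2" 1] x by auto
  have "u x t \<le> barrier e m (max 1 (U - l) / (2/K)^3) (5/4 - 1/K) x
      + (l + \<eta> * t + max 1 (U - l) * (max 0 (t - t))^2)"
    by (rule visc_sub_le_barrier[OF F e cont sub m initial bound _ t \<eta> \<open>x \<in> cell e m 1\<close>]) (use t in auto)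
  moreover have "1 < 5/4 - 1/K" using K_ge_8 by (simp add: field_simps)
  then have "barrier e m (max 1 (U - l) / (2/K)^3) (5/4 - 1/K) x = 0"
    using rescaled_level_le_one[OF x] by (intro barrier_eq_0) simp
  ultimately show ?thesis by simp
qed

lemma visc_sub_cell_bound:
  assumes "\<bar>F\<bar> < 1" "0 < e" "continuous_on (UNIV \<times> {0..}) (\<lambda>z. u (fst z) (snd z))"
    and "visc_sub (pinning_coeff c K) e F u" "\<forall>i. m$i \<in> \<int>"
    and "x \<in> cell e m (1/2)" "\<And>y. y \<in> cell e m 1 \<Longrightarrow> u y 0 \<le> l" and t: "0 \<le> t"
  shows "u x t \<le> l"
proof (rule field_le_epsilon)
  fix \<epsilon> :: real assume "0 < \<epsilon>"
  then have "u x t \<le> l + \<epsilon> / (t + 1) * t"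
    using t by (intro visc_sub_cell_bound_slack[OF assms(1-7)]) auto
  also have "\<epsilon> / (t + 1) * t \<le> \<epsilon>"
    using \<open>0 < \<epsilon>\<close> t by (simp add: field_simps)
  finally show "u x t \<le> l + \<epsilon>" by simp
qed

lemma visc_solution_near_initial:
  assumes F: "\<bar>F\<bar> < 1" and e: "0 < e" and sol: "visc_solution (pinning_coeff c K) e F u0 u"
    and t: "0 \<le> t" and osc: "\<And>y. dist y x \<le> 3 * e \<Longrightarrow> \<bar>u0 y - u0 x\<bar> \<le> \<delta>"
  shows "\<bar>u x t - u0 x\<bar> \<le> \<delta>"
proof -
  obtain m where m: "\<forall>i. m$i \<in> \<int>" and x: "x \<in> cell e m (1/2)"
    using exists_cell_containing[OF e] by blast
  have cont: "continuous_on (UNIV \<times> {0..}) (\<lambda>z. u (fst z) (snd z))"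
    and init: "\<And>y. u y 0 = u0 y"
    using sol by (simp_all add: visc_solution_def)
  have near: "\<bar>u0 y - u0 x\<bar> \<le> \<delta>" if "y \<in> cell e m 1" for y
    using osc dist_le_in_cell[OF e x that] by blast
  have "u x t \<le> u0 x + \<delta>"
  proof (rule visc_sub_cell_bound[OF F e cont _ m x _ t])
    show "visc_sub (pinning_coeff c K) e F u" using sol by (simp add: visc_solution_def)
    show "u y 0 \<le> u0 x + \<delta>" if "y \<in> cell e m 1" for y
      using near[OF that] by (simp add: init abs_le_iff)
  qed
  moreover have "- u x t \<le> - u0 x + \<delta>"
  proof (rule visc_sub_cell_bound[where u = "\<lambda>x t. - u x t", OF _ e _ _ m x _ t])
    show "\<bar>- F\<bar> < 1" using F by simp
    show "continuous_on (UNIV \<times> {0..}) (\<lambda>z. - u (fst z) (snd z))"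
      using cont by (rule continuous_on_minus)
    show "visc_sub (pinning_coeff c K) e (- F) (\<lambda>x t. - u x t)"
      using sol by (simp add: visc_solution_def visc_super_uminus)
    show "- u y 0 \<le> - u0 x + \<delta>" if "y \<in> cell e m 1" for y
      using near[OF that] by (simp add: init abs_le_iff)
  qed
  ultimately show ?thesis by linarith
qed

lemma visc_solutions_loc_unif_conv:
  assumes F: "\<bar>F\<bar> < 1" and "uniformly_continuous_on UNIV u0"
    and sol: "\<And>e. 0 < e \<Longrightarrow> visc_solution (pinning_coeff c K) e F u0 (u e)"
  shows "loc_unif_conv u u0"
proof (rule loc_unif_convI)
  fix \<delta> :: real assume "0 < \<delta>"
  with \<open>uniformly_continuous_on UNIV u0\<close> obtain r where r: "0 < r"
    and osc: "\<And>x y. dist y x < r \<Longrightarrow> \<bar>u0 y - u0 x\<bar> < \<delta>/2"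
    unfolding uniformly_continuous_on_def dist_real_def by (meson UNIV_I half_gt_zero)
  have "\<bar>u e x t - u0 x\<bar> < \<delta>" if "0 < e" "e < r/3" "0 \<le> t" for e x t
  proof -
    have "\<bar>u e x t - u0 x\<bar> \<le> \<delta>/2"
    proof (rule visc_solution_near_initial[OF F \<open>0 < e\<close> sol[OF \<open>0 < e\<close>] \<open>0 \<le> t\<close>])
      show "\<bar>u0 y - u0 x\<bar> \<le> \<delta>/2" if "dist y x \<le> 3 * e" for y
        using osc[of y x] that \<open>e < r/3\<close> by simp
    qed
    then show ?thesis using \<open>0 < \<delta>\<close> by linarith
  qed
  then show "\<exists>e0>0. \<forall>e x t. 0 < e \<longrightarrow> e < e0 \<longrightarrow> 0 \<le> t \<longrightarrow> \<bar>u e x t - u0 x\<bar> < \<delta>"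
    using r by (intro exI[of _ "r/3"]) auto
qed

end

lemma pinning_params_exist:
  assumes "1 < \<Lambda>"
  obtains c K d where "pinning_params c K d" "1 + 4 * c = \<Lambda>"
proof -
  obtain d where d: "0 < d"
    "\<And>w. 9/8 \<le> cell_level 1 w \<Longrightarrow> cell_level 1 w \<le> 11/8 \<Longrightarrow> d \<le> norm (cell_level_grad 1 w)"
    by (rule cell_level_grad_bounded_below) auto
  define c where "c = (\<Lambda> - 1) / 4"
  define K where "K = max 8 (81 / c * (100 * (1 + 4 * c) / d^2 + 1 / d))"
  have c: "0 < c" using assms by (simp add: c_def)
  have "pinning_params c K d"
  proof
    have "81 / c * (100 * (1 + 4 * c) / d^2 + 1 / d) \<le> K" by (simp add: K_def)
    then show "100 * (1 + 4 * c) / d^2 + 1 / d \<le> c * K / 81"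
      using c by (simp add: field_simps)
  qed (use c d in \<open>auto simp: K_def\<close>)
  then show ?thesis
    by (rule that) (simp add: c_def field_simps)
qed

theorem theorem1p4:
  fixes \<Lambda> :: real
  assumes "\<Lambda> > 1"
  shows "\<exists>a :: real^2 \<Rightarrow> real. \<exists>Fa > 0.
           smooth2 a \<and> periodic2 a \<and> (\<forall>x. 1 \<le> a x \<and> a x \<le> \<Lambda>) \<and>
           (\<forall>F u0 u. \<bar>F\<bar> < Fa \<and> uniformly_continuous_on UNIV u0 \<and>
              (\<forall>e>0. visc_solution a e F u0 (u e)) \<longrightarrow> loc_unif_conv u u0)"
proof -
  obtain c K d where "pinning_params c K d" and \<Lambda>: "1 + 4 * c = \<Lambda>"
    using pinning_params_exist[OF assms] .
  interpret pinning_params c K d by fact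
  have "1 \<le> pinning_coeff c K x \<and> pinning_coeff c K x \<le> \<Lambda>" for x
    using pinning_coeff_range[of c K x] c_pos \<Lambda> by simp
  then show ?thesis
    using trig_exp_smooth2[OF pinning_coeff_trig_exp] pinning_coeff_periodic2 visc_solutions_loc_unif_conv
    by (intro exI[of _ "pinning_coeff c K"] exI[of _ "1::real"]) auto
qed

end
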